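(* Let $\Omega\subset\mathbb{R}^3$ be a bounded domain with $C^2$ boundary and outward unit normal $\nu$. Suppose that $v\in C^1(\Omega)\cap L^2(\Omega)$ is a solution to the stationary Euler equation $v\cdot\nabla v+\nabla\widetilde p=0$, $\mathrm{div}\, v=0$ in $\Omega$, with pressure $\widetilde p\in C^1(\Omega)\cap L^1(\Omega)$. Assume that $\nu\cdot v|_{\partial\Omega}=0$ and $\widetilde p|_{\partial\Omega}=c$, where $c$ is a constant. Then \[ u(x):=\begin{cases} v(x) & x\in\Omega,\\ 0 & x\notin\Omega,\end{cases} \qquad p(x):=\begin{cases} \widetilde p(x) & x\in\Omega,\\ c & x\notin\Omega,\end{cases} \] define a weak solution $(u,p)$ of the stationary Euler equation on $\mathbb{R}^3$.
   Context: A pair $(u,p)\in L^2_{\mathrm{loc}}(\mathbb{R}^3)$ is a weak solution of the stationary Euler equation if $\int_{\mathbb{R}^3}[(u\otimes u)\cdot\nabla w+p\,\mathrm{div}\, w]\,dx=0$ and $\int_{\mathbb{R}^3}u\cdot\nabla\phi\,dx=0$ for all vector fields $w\in C^\infty_c(\mathbb{R}^3;\mathbb{R}^3)$ and all $\phi\in C^\infty_c(\mathbb{R}^3)$. *)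

theory Defs
  imports "HOL-Analysis.Analysis"
begin

definition pd :: "3 \<Rightarrow> (real^3 \<Rightarrow> real) \<Rightarrow> real^3 \<Rightarrow> real" where
  "pd i f x = frechet_derivative f (at x) (axis i 1)"

definition grad :: "(real^3 \<Rightarrow> real) \<Rightarrow> real^3 \<Rightarrow> real^3" where
  "grad f x = (\<chi> i. pd i f x)"

fun Ck_on :: "nat \<Rightarrow> (real^3) set \<Rightarrow> (real^3 \<Rightarrow> real) \<Rightarrow> bool" where
  "Ck_on 0 S f = continuous_on S f"
| "Ck_on (Suc k) S f = (f differentiable_on S \<and> (\<forall>i. Ck_on k S (pd i f)))"

definition smooth :: "(real^3 \<Rightarrow> real) \<Rightarrow> bool" where
  "smooth f \<longleftrightarrow> (\<forall>k. Ck_on k UNIV f)"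

definition test_fun :: "(real^3 \<Rightarrow> real) \<Rightarrow> bool" where
  "test_fun f \<longleftrightarrow> smooth f \<and> compact (closure {x. f x \<noteq> 0})"

definition test_field :: "(real^3 \<Rightarrow> real^3) \<Rightarrow> bool" where
  "test_field w \<longleftrightarrow> (\<forall>i. smooth (\<lambda>x. w x $ i)) \<and> compact (closure {x. w x \<noteq> 0})"

definition div3 :: "(real^3 \<Rightarrow> real^3) \<Rightarrow> real^3 \<Rightarrow> real" where
  "div3 w x = (\<Sum>i\<in>UNIV. pd i (\<lambda>y. w y $ i) x)"

text \<open>(u \<otimes> u) : \<nabla> w = sum over i,j of u_i u_j d_j w_i\<close>
definition tensor_grad :: "real^3 \<Rightarrow> (real^3 \<Rightarrow> real^3) \<Rightarrow> real^3 \<Rightarrow> real" where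
  "tensor_grad a w x = (\<Sum>i\<in>UNIV. \<Sum>j\<in>UNIV. a $ i * a $ j * pd j (\<lambda>y. w y $ i) x)"

definition L2_loc :: "(real^3 \<Rightarrow> 'b::euclidean_space) \<Rightarrow> bool" where
  "L2_loc f \<longleftrightarrow> f \<in> borel_measurable lborel \<and>
     (\<forall>K. compact K \<longrightarrow> set_integrable lborel K (\<lambda>x. (norm (f x))\<^sup>2))"

definition weak_euler :: "(real^3 \<Rightarrow> real^3) \<Rightarrow> (real^3 \<Rightarrow> real) \<Rightarrow> bool" where
  "weak_euler u p \<longleftrightarrow> L2_loc u \<and> L2_loc p \<and>
     (\<forall>w. test_field w \<longrightarrow>
        (\<integral>x. tensor_grad (u x) w x + p x * div3 w x \<partial>lborel) = 0) \<and>
     (\<forall>\<phi>. test_fun \<phi> \<longrightarrow> (\<integral>x. u x \<bullet> grad \<phi> x \<partial>lborel) = 0)"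

definition C2_boundary_normal :: "(real^3) set \<Rightarrow> (real^3 \<Rightarrow> real^3) \<Rightarrow> bool" where
  "C2_boundary_normal \<Omega> \<nu> \<longleftrightarrow>
     (\<forall>x0 \<in> frontier \<Omega>. \<exists>r>0. \<exists>\<phi>. Ck_on 2 (ball x0 r) \<phi> \<and>
        (\<forall>x\<in>ball x0 r. grad \<phi> x \<noteq> 0) \<and>
        \<Omega> \<inter> ball x0 r = {x \<in> ball x0 r. \<phi> x < 0} \<and>
        (\<forall>x \<in> frontier \<Omega> \<inter> ball x0 r. \<nu> x = grad \<phi> x /\<^sub>R norm (grad \<phi> x)))"

end

theory Submission
  imports Defs
begin

text \<open>For a test field \<open>w\<close>, the Euler equations and
  \<open>div v = 0\<close> give \<open>div F = (v \<otimes> v) : \<nabla>w + (p - c) div w\<close> in \<open>\<Omega>\<close> for the flux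
  \<open>F = (v \<bullet> w) v + (p - c) w\<close>, and the two boundary conditions make \<open>F\<close> tangential on
  \<open>\<partial>\<Omega>\<close>. Since \<open>\<integral> c div w = 0\<close>, the weak momentum equation is \<open>\<integral>\<^sub>\<Omega> div F = 0\<close>; likewise
  weak incompressibility for \<open>\<phi>\<close> is \<open>\<integral>\<^sub>\<Omega> div (\<phi> v) = 0\<close>. Both are instances of the divergence
  theorem for fields that are continuous up to the boundary, \<open>C\<^sup>1\<close> inside with bounded
  divergence, and tangential on \<open>\<partial>\<Omega>\<close>. That theorem is localised by a \<open>C\<^sup>1\<close> partition of
  unity. Near an interior point the field extends by zero to a compactly supported \<open>C\<^sup>1\<close> field,
  whose divergence integrates to zero. Near a boundary point, where \<open>\<Omega> = {\<phi> < 0}\<close>, the field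
  is multiplied by a cut-off of \<open>\<phi> / \<epsilon>\<close>; the error lives in the layer \<open>-2\<epsilon> < \<phi> < 0\<close>
  of measure \<open>O(\<epsilon>)\<close>, where the cut-off has gradient \<open>O(1/\<epsilon>)\<close> but \<open>\<nabla>\<phi> \<bullet> G\<close> is
  small by the boundary condition.\<close>

section \<open>Functions that are \<open>C\<^sup>1\<close> at a point\<close>

definition C1_at :: "(real^3 \<Rightarrow> real) \<Rightarrow> real^3 \<Rightarrow> bool" where
  "C1_at f x \<longleftrightarrow>
     (\<exists>T. open T \<and> x \<in> T \<and> (\<forall>y\<in>T. f differentiable at y)) \<and> (\<forall>i. isCont (pd i f) x)"

lemma pd_eq_derivative: "(f has_derivative D) (at x) \<Longrightarrow> pd i f x = D (axis i 1)"
  unfolding pd_def by (metis frechet_derivative_at)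

lemma pd_cong_open:
  assumes "open T" "x \<in> T" "\<And>y. y \<in> T \<Longrightarrow> f y = g y"
  shows "pd i f x = pd i g x"
proof -
  have "(f has_derivative D) (at x) \<longleftrightarrow> (g has_derivative D) (at x)" for D
    using has_derivative_transform_within_open[OF _ assms(1,2)] assms(3) by metis
  then show ?thesis
    unfolding pd_def frechet_derivative_def by simp
qed

lemma pd_eq_0_open: "open U \<Longrightarrow> x \<in> U \<Longrightarrow> \<forall>z\<in>U. f z = 0 \<Longrightarrow> pd i f x = 0"
  using pd_cong_open[of U x f "\<lambda>z. 0" i] pd_eq_derivative[OF has_derivative_const] by simp

lemma C1_at_intro:
  assumes "open T" "x \<in> T" "\<And>y. y \<in> T \<Longrightarrow> (f has_derivative D y) (at y)"
    and "\<And>i. isCont (\<lambda>y. D y (axis i 1)) x"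
  shows "C1_at f x"
proof -
  have ev: "eventually (\<lambda>y. pd i f y = D y (axis i 1)) (nhds x)" for i
    unfolding eventually_nhds using assms(1-3) pd_eq_derivative by metis
  have "isCont (pd i f) x" for i
    using isCont_cong[OF ev] assms(4) by simp
  then show ?thesis
    unfolding C1_at_def using assms(1-3) differentiable_def by blast
qed

lemma C1_at_differentiable: "C1_at f x \<Longrightarrow> f differentiable at x"
  unfolding C1_at_def by blast

lemma C1_at_isCont: "C1_at f x \<Longrightarrow> isCont f x"
  using C1_at_differentiable differentiable_imp_continuous_within by blast

lemma C1_at_isCont_pd: "C1_at f x \<Longrightarrow> isCont (pd i f) x"
  unfolding C1_at_def by blast

lemma C1_at_has_derivative:
  assumes "C1_at f x"
  obtains T where "open T" "x \<in> T"
    "\<And>y. y \<in> T \<Longrightarrow> (f has_derivative frechet_derivative f (at y)) (at y)"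
  using assms frechet_derivative_works unfolding C1_at_def by blast

lemma C1_at_cong:
  assumes "open T" "x \<in> T" "\<And>y. y \<in> T \<Longrightarrow> f y = g y" "C1_at g x"
  shows "C1_at f x"
proof -
  obtain T' where T': "open T'" "x \<in> T'"
      "\<And>y. y \<in> T' \<Longrightarrow> (g has_derivative frechet_derivative g (at y)) (at y)"
    using C1_at_has_derivative[OF assms(4)] by metis
  show ?thesis
  proof (rule C1_at_intro[where D = "\<lambda>y. frechet_derivative g (at y)"])
    show "open (T \<inter> T')" "x \<in> T \<inter> T'"
      using assms(1,2) T' by auto
    show "(f has_derivative frechet_derivative g (at y)) (at y)" if "y \<in> T \<inter> T'" for y
      using has_derivative_transform_within_open[OF T'(3) assms(1)] assms(3) that by auto
    show "isCont (\<lambda>y. frechet_derivative g (at y) (axis i 1)) x" for i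
      using C1_at_isCont_pd[OF assms(4)] unfolding pd_def .
  qed
qed

lemma C1_at_const: "C1_at (\<lambda>y. c) x"
  by (rule C1_at_intro[of UNIV _ _ "\<lambda>y v. 0"]) auto

lemma C1_at_eq_0_open: "open U \<Longrightarrow> x \<in> U \<Longrightarrow> \<forall>z\<in>U. f z = 0 \<Longrightarrow> C1_at f x"
  by (rule C1_at_cong[of U x f "\<lambda>z. 0"]) (auto intro: C1_at_const)

lemma C1_at_add:
  assumes "C1_at f x" "C1_at g x"
  shows "C1_at (\<lambda>y. f y + g y) x"
proof -
  obtain T1 where T1: "open T1" "x \<in> T1"
      "\<And>y. y \<in> T1 \<Longrightarrow> (f has_derivative frechet_derivative f (at y)) (at y)"
    using C1_at_has_derivative[OF assms(1)] by metis
  obtain T2 where T2: "open T2" "x \<in> T2"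
      "\<And>y. y \<in> T2 \<Longrightarrow> (g has_derivative frechet_derivative g (at y)) (at y)"
    using C1_at_has_derivative[OF assms(2)] by metis
  show ?thesis
  proof (rule C1_at_intro[of "T1 \<inter> T2" _ _
        "\<lambda>y v. frechet_derivative f (at y) v + frechet_derivative g (at y) v"])
    show "((\<lambda>y. f y + g y) has_derivative
        (\<lambda>v. frechet_derivative f (at y) v + frechet_derivative g (at y) v)) (at y)"
      if "y \<in> T1 \<inter> T2" for y
      using has_derivative_add[OF T1(3) T2(3)] that by auto
    show "isCont (\<lambda>y. frechet_derivative f (at y) (axis i 1)
        + frechet_derivative g (at y) (axis i 1)) x" for i
      using assms C1_at_isCont_pd unfolding pd_def by (intro continuous_intros) auto
  qed (use T1 T2 in auto)
qed

lemma C1_at_mult: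
  assumes "C1_at f x" "C1_at g x"
  shows "C1_at (\<lambda>y. f y * g y) x"
proof -
  obtain T1 where T1: "open T1" "x \<in> T1"
      "\<And>y. y \<in> T1 \<Longrightarrow> (f has_derivative frechet_derivative f (at y)) (at y)"
    using C1_at_has_derivative[OF assms(1)] by metis
  obtain T2 where T2: "open T2" "x \<in> T2"
      "\<And>y. y \<in> T2 \<Longrightarrow> (g has_derivative frechet_derivative g (at y)) (at y)"
    using C1_at_has_derivative[OF assms(2)] by metis
  show ?thesis
  proof (rule C1_at_intro[of "T1 \<inter> T2" _ _
        "\<lambda>y v. f y * frechet_derivative g (at y) v + frechet_derivative f (at y) v * g y"])
    show "((\<lambda>y. f y * g y) has_derivative
        (\<lambda>v. f y * frechet_derivative g (at y) v + frechet_derivative f (at y) v * g y)) (at y)"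
      if "y \<in> T1 \<inter> T2" for y
      using has_derivative_mult[OF T1(3) T2(3)] that by auto
    show "isCont (\<lambda>y. f y * frechet_derivative g (at y) (axis i 1)
        + frechet_derivative f (at y) (axis i 1) * g y) x" for i
      using assms C1_at_isCont C1_at_isCont_pd unfolding pd_def
      by (intro continuous_intros) auto
  qed (use T1 T2 in auto)
qed

lemma C1_at_diff:
  assumes "C1_at f x" "C1_at g x"
  shows "C1_at (\<lambda>y. f y - g y) x"
  using C1_at_add[OF assms(1) C1_at_mult[OF C1_at_const[of "-1"] assms(2)]] by simp

lemma C1_at_sum:
  "finite A \<Longrightarrow> (\<And>k. k \<in> A \<Longrightarrow> C1_at (f k) x) \<Longrightarrow> C1_at (\<lambda>y. \<Sum>k\<in>A. f k y) x"
  by (induction A rule: finite_induct) (auto intro: C1_at_const C1_at_add)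

lemma C1_at_compose:
  fixes h h' :: "real \<Rightarrow> real"
  assumes "C1_at f x" "\<And>s. (h has_real_derivative h' s) (at s)" "continuous_on UNIV h'"
  shows "C1_at (\<lambda>y. h (f y)) x"
proof -
  obtain T where T: "open T" "x \<in> T"
      "\<And>y. y \<in> T \<Longrightarrow> (f has_derivative frechet_derivative f (at y)) (at y)"
    using C1_at_has_derivative[OF assms(1)] by metis
  show ?thesis
  proof (rule C1_at_intro[of T _ _ "\<lambda>y v. h' (f y) * frechet_derivative f (at y) v"])
    show "((\<lambda>y. h (f y)) has_derivative (\<lambda>v. h' (f y) * frechet_derivative f (at y) v)) (at y)"
      if "y \<in> T" for y
      using has_derivative_compose[OF T(3)[OF that] assms(2)[unfolded has_field_derivative_def]]
      by (simp add: mult.commute)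
    have "isCont (\<lambda>y. h' (f y)) x"
      using assms(3) C1_at_isCont[OF assms(1)]
      by (simp add: continuous_on_eq_continuous_at continuous_at_compose[of x f h', unfolded o_def])
    then show "isCont (\<lambda>y. h' (f y) * frechet_derivative f (at y) (axis i 1)) x" for i
      using C1_at_isCont_pd[OF assms(1)] unfolding pd_def by (intro continuous_intros)
  qed (use T in auto)
qed

lemma
  fixes f :: "real^3 \<Rightarrow> real"
  assumes "open D" "\<And>x. x \<in> D \<Longrightarrow> C1_at f x"
    and vanish: "\<And>x. x \<notin> D \<Longrightarrow> \<exists>U. open U \<and> x \<in> U \<and> (\<forall>z\<in>U \<inter> D. f z = 0)"
  shows C1_at_zero_extension: "C1_at (\<lambda>z. if z \<in> D then f z else 0) x"
    and pd_zero_extension: "pd i (\<lambda>z. if z \<in> D then f z else 0) x = (if x \<in> D then pd i f x else 0)"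
proof -
  have "C1_at (\<lambda>z. if z \<in> D then f z else 0) x \<and>
      pd i (\<lambda>z. if z \<in> D then f z else 0) x = (if x \<in> D then pd i f x else 0)"
  proof (cases "x \<in> D")
    case True
    have "C1_at (\<lambda>z. if z \<in> D then f z else 0) x"
      by (rule C1_at_cong[OF assms(1) True _ assms(2)[OF True]]) simp
    moreover have "pd i (\<lambda>z. if z \<in> D then f z else 0) x = pd i f x"
      by (rule pd_cong_open[OF assms(1) True]) simp
    ultimately show ?thesis
      using True by simp
  next
    case False
    then obtain U where U: "open U" "x \<in> U" "\<forall>z\<in>U \<inter> D. f z = 0"
      using vanish by blast
    then have "\<forall>z\<in>U. (if z \<in> D then f z else 0) = 0"
      by auto
    then show ?thesis
      using C1_at_eq_0_open[OF U(1,2)] pd_eq_0_open[OF U(1,2)] False by simp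
  qed
  then show "C1_at (\<lambda>z. if z \<in> D then f z else 0) x"
    and "pd i (\<lambda>z. if z \<in> D then f z else 0) x = (if x \<in> D then pd i f x else 0)"
    by auto
qed

lemma continuous_on_C1_at: "(\<And>x. x \<in> S \<Longrightarrow> C1_at f x) \<Longrightarrow> continuous_on S f"
  by (simp add: C1_at_isCont continuous_at_imp_continuous_on)

lemma continuous_on_pd_C1_at: "(\<And>x. x \<in> S \<Longrightarrow> C1_at f x) \<Longrightarrow> continuous_on S (pd i f)"
  by (simp add: C1_at_isCont_pd continuous_at_imp_continuous_on)

lemma pd_const: "pd i (\<lambda>y. c) x = 0"
  using pd_eq_derivative[OF has_derivative_const] by simp

lemma pd_add:
  assumes "f differentiable at x" "g differentiable at x"
  shows "pd i (\<lambda>y. f y + g y) x = pd i f x + pd i g x"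
  using pd_eq_derivative[OF has_derivative_add[OF assms[unfolded frechet_derivative_works]]]
  by (simp add: pd_def)

lemma pd_diff:
  assumes "f differentiable at x" "g differentiable at x"
  shows "pd i (\<lambda>y. f y - g y) x = pd i f x - pd i g x"
  using pd_eq_derivative[OF has_derivative_diff[OF assms[unfolded frechet_derivative_works]]]
  by (simp add: pd_def)

lemma pd_mult:
  assumes "f differentiable at x" "g differentiable at x"
  shows "pd i (\<lambda>y. f y * g y) x = f x * pd i g x + pd i f x * g x"
  using pd_eq_derivative[OF has_derivative_mult[OF assms[unfolded frechet_derivative_works]]]
  by (simp add: pd_def)

lemma pd_sum:
  assumes "finite A" "\<And>k. k \<in> A \<Longrightarrow> f k differentiable at x"
  shows "pd i (\<lambda>y. \<Sum>k\<in>A. f k y) x = (\<Sum>k\<in>A. pd i (f k) x)"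
proof -
  have "((\<lambda>y. \<Sum>k\<in>A. f k y) has_derivative (\<lambda>v. \<Sum>k\<in>A. frechet_derivative (f k) (at x) v)) (at x)"
    using assms(2) frechet_derivative_works by (intro has_derivative_sum) blast
  from pd_eq_derivative[OF this] show ?thesis
    by (simp add: pd_def)
qed

lemma pd_compose:
  fixes h :: "real \<Rightarrow> real"
  assumes "f differentiable at x" "(h has_real_derivative d) (at (f x))"
  shows "pd i (\<lambda>y. h (f y)) x = d * pd i f x"
  using pd_eq_derivative[OF has_derivative_compose[OF assms(1)[unfolded frechet_derivative_works]
        assms(2)[unfolded has_field_derivative_def]]]
  by (simp add: pd_def)

lemma Ck_on_1_iff_C1_at: "open S \<Longrightarrow> Ck_on 1 S f \<longleftrightarrow> (\<forall>x\<in>S. C1_at f x)"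
  by (auto simp: C1_at_def differentiable_on_eq_differentiable_at continuous_on_eq_continuous_at)

lemma Ck_on_Suc_imp_Ck_on: "Ck_on (Suc k) S f \<Longrightarrow> Ck_on k S f"
proof (induction k arbitrary: f)
  case 0
  then show ?case by (simp add: differentiable_imp_continuous_on)
next
  case (Suc k)
  then show ?case by simp
qed

lemma smooth_pd: "smooth f \<Longrightarrow> smooth (pd i f)"
  unfolding smooth_def by (metis Ck_on.simps(2))

lemma smooth_imp_C1_at: "smooth f \<Longrightarrow> C1_at f x"
  using Ck_on_1_iff_C1_at[of UNIV f] unfolding smooth_def by blast

section \<open>Mean value estimates and integrals of partial derivatives\<close>

lemma has_real_derivative_along_axis:
  fixes f :: "real^3 \<Rightarrow> real"
  assumes "f differentiable at (x + s *\<^sub>R axis k 1)"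
  shows "((\<lambda>s. f (x + s *\<^sub>R axis k 1)) has_real_derivative pd k f (x + s *\<^sub>R axis k 1)) (at s)"
proof -
  let ?D = "frechet_derivative f (at (x + s *\<^sub>R axis k 1))"
  have D: "(f has_derivative ?D) (at (x + s *\<^sub>R axis k 1))"
    using assms frechet_derivative_works by blast
  have "((\<lambda>s. x + s *\<^sub>R axis k 1) has_derivative (\<lambda>s. s *\<^sub>R axis k 1)) (at s)"
    by (auto intro!: derivative_eq_intros)
  from has_derivative_compose[OF this D]
  have "((\<lambda>s. f (x + s *\<^sub>R axis k 1)) has_derivative (\<lambda>h. ?D (h *\<^sub>R axis k 1))) (at s)"
    by (simp add: o_def)
  moreover have "(\<lambda>h. ?D (h *\<^sub>R axis k 1)) = (*) (?D (axis k 1))"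
    using linear_cmul[OF has_derivative_linear[OF D]] by (simp add: fun_eq_iff mult.commute)
  ultimately show ?thesis
    unfolding has_field_derivative_def pd_def by simp
qed

lemma mvt_along_axis:
  fixes f :: "real^3 \<Rightarrow> real"
  assumes "convex S" "x \<in> S" "x + t *\<^sub>R axis k 1 \<in> S" "\<And>y. y \<in> S \<Longrightarrow> f differentiable at y"
  obtains s where "x + s *\<^sub>R axis k 1 \<in> S"
    "f (x + t *\<^sub>R axis k 1) - f x = t * pd k f (x + s *\<^sub>R axis k 1)"
proof -
  define g where "g s = f (x + s *\<^sub>R axis k 1)" for s
  have on_segment: "x + s *\<^sub>R axis k 1 \<in> S" if "min 0 t \<le> s" "s \<le> max 0 t" for s
  proof (cases "t = 0")
    case False
    have "(1 - s / t) *\<^sub>R x + (s / t) *\<^sub>R (x + t *\<^sub>R axis k 1) \<in> S"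
      using assms(1-3) that False unfolding convex_alt
      by (auto simp: divide_le_eq_1 zero_le_divide_iff min_def max_def split: if_splits)
    then show ?thesis
      using False by (simp add: algebra_simps)
  qed (use that assms(2) in simp)
  have "\<exists>s\<in>{min 0 t..max 0 t}. g (max 0 t) - g (min 0 t) = pd k f (x + s *\<^sub>R axis k 1) * (max 0 t - min 0 t)"
  proof (rule mvt_very_simple[where f' = "\<lambda>s. (*) (pd k f (x + s *\<^sub>R axis k 1))"])
    show "(g has_derivative (*) (pd k f (x + s *\<^sub>R axis k 1))) (at s within {min 0 t..max 0 t})"
      if "min 0 t \<le> s" "s \<le> max 0 t" for s
      using has_real_derivative_along_axis[OF assms(4)[OF on_segment[OF that]]]
      unfolding g_def has_field_derivative_def by (rule has_derivative_at_withinI)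
  qed simp
  then obtain s where s: "min 0 t \<le> s" "s \<le> max 0 t"
    and mvt: "g (max 0 t) - g (min 0 t) = pd k f (x + s *\<^sub>R axis k 1) * (max 0 t - min 0 t)"
    by auto
  have "g t - g 0 = t * pd k f (x + s *\<^sub>R axis k 1)"
    using mvt by (cases "0 \<le> t") (auto simp: min_def max_def algebra_simps)
  then show ?thesis
    using that[of s] on_segment[OF s] unfolding g_def by simp
qed

lemma abs_diff_along_axis_le:
  fixes f :: "real^3 \<Rightarrow> real"
  assumes "\<And>y. f differentiable at y" "\<And>y. \<bar>pd k f y\<bar> \<le> M"
  shows "\<bar>f (x + t *\<^sub>R axis k 1) - f x\<bar> \<le> M * \<bar>t\<bar>"
proof -
  obtain s where "f (x + t *\<^sub>R axis k 1) - f x = t * pd k f (x + s *\<^sub>R axis k 1)"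
    using mvt_along_axis[of UNIV x t k f] assms(1) by auto
  moreover have "\<bar>pd k f (x + s *\<^sub>R axis k 1)\<bar> * \<bar>t\<bar> \<le> M * \<bar>t\<bar>"
    using assms(2) by (rule mult_right_mono) simp
  ultimately show ?thesis
    by (simp add: abs_mult mult.commute)
qed

lemma abs_diff_along_axis_ge:
  fixes f :: "real^3 \<Rightarrow> real"
  assumes "convex S" "x \<in> S" "x + t *\<^sub>R axis k 1 \<in> S"
    and "\<And>y. y \<in> S \<Longrightarrow> f differentiable at y" "\<And>y. y \<in> S \<Longrightarrow> c \<le> \<bar>pd k f y\<bar>"
  shows "c * \<bar>t\<bar> \<le> \<bar>f (x + t *\<^sub>R axis k 1) - f x\<bar>"
proof -
  obtain s where s: "x + s *\<^sub>R axis k 1 \<in> S"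
    "f (x + t *\<^sub>R axis k 1) - f x = t * pd k f (x + s *\<^sub>R axis k 1)"
    using mvt_along_axis[OF assms(1-4)] by blast
  have "c * \<bar>t\<bar> \<le> \<bar>pd k f (x + s *\<^sub>R axis k 1)\<bar> * \<bar>t\<bar>"
    using assms(5)[OF s(1)] by (rule mult_right_mono) simp
  then show ?thesis
    unfolding s(2) by (simp add: abs_mult mult.commute)
qed

lemma integrable_bounded_support:
  fixes g :: "'a::euclidean_space \<Rightarrow> real"
  assumes "g \<in> borel_measurable lborel" "\<And>x. \<bar>g x\<bar> \<le> M" "\<And>x. x \<notin> cball 0 R \<Longrightarrow> g x = 0"
  shows "integrable lborel g"
proof (rule Bochner_Integration.integrable_bound[of _ "\<lambda>x. M * indicator (cball 0 R) x"])
  show "integrable lborel (\<lambda>x. M * indicator (cball 0 R) x)"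
    using emeasure_lborel_cball_finite by (intro integrable_mult_right integrable_real_indicator) auto
  have "norm (g x) \<le> norm (M * indicator (cball 0 R) x)" for x
    using assms(2)[of x] assms(3)[of x] by (cases "x \<in> cball 0 R") auto
  then show "AE x in lborel. norm (g x) \<le> norm (M * indicator (cball 0 R) x)"
    by simp
qed (rule assms(1))

lemma lborel_integral_translate:
  fixes f :: "'a::euclidean_space \<Rightarrow> real"
  assumes "integrable lborel f"
  shows "integrable lborel (\<lambda>x. f (c + x))" "(\<integral>x. f (c + x) \<partial>lborel) = (\<integral>x. f x \<partial>lborel)"
proof -
  have T: "(+) c \<in> measurable lborel borel" and f: "f \<in> borel_measurable borel"
    using assms by auto
  show "integrable lborel (\<lambda>x. f (c + x))"
    using integrable_distr_eq[OF T f] assms by (simp add: lborel_distr_plus)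
  show "(\<integral>x. f (c + x) \<partial>lborel) = (\<integral>x. f x \<partial>lborel)"
    using integral_distr[OF T f] by (simp add: lborel_distr_plus)
qed

lemma bounded_pd_compact_support:
  fixes f :: "real^3 \<Rightarrow> real"
  assumes C1: "\<And>x. C1_at f x" and supp: "\<And>x. R \<le> norm x \<Longrightarrow> f x = 0"
  obtains M where "\<And>x. \<bar>pd i f x\<bar> \<le> M"
proof -
  have "pd i f x = 0" if "R < norm x" for x
    by (rule pd_eq_0_open[of "{y. R < norm y}"]) (use that supp in \<open>auto intro: open_Collect_less continuous_intros\<close>)
  moreover have "bounded (pd i f ` cball 0 R)"
    using continuous_on_pd_C1_at[OF C1] by (intro compact_imp_bounded compact_continuous_image) auto
  then obtain B where "\<forall>x\<in>cball 0 R. \<bar>pd i f x\<bar> \<le> B"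
    by (auto simp: bounded_iff)
  ultimately have "\<bar>pd i f x\<bar> \<le> max B 0" for x
    by (cases "norm x \<le> R") (auto simp: le_max_iff_disj)
  then show thesis
    by (rule that)
qed

lemma integrable_compact_support:
  fixes f :: "real^3 \<Rightarrow> real"
  assumes "continuous_on UNIV f" "\<And>x. R \<le> norm x \<Longrightarrow> f x = 0"
  shows "integrable lborel f"
proof -
  have "integrable lborel (\<lambda>x. indicator (cball 0 R) x *\<^sub>R f x)"
    using assms(1) by (intro borel_integrable_compact) (auto intro: continuous_on_subset)
  moreover have "(\<lambda>x. indicator (cball 0 R) x *\<^sub>R f x) = f"
    using assms(2) by (force simp: indicator_def fun_eq_iff)
  ultimately show ?thesis
    by metis
qed

lemma difference_quotients_tendsto_pd:
  fixes f :: "real^3 \<Rightarrow> real"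
  assumes "f differentiable at x" "filterlim h (at 0) sequentially"
  shows "(\<lambda>n. (f (x + h n *\<^sub>R axis i 1) - f x) / h n) \<longlonglongrightarrow> pd i f x"
proof -
  have "((\<lambda>t. f (x + t *\<^sub>R axis i 1)) has_real_derivative pd i f x) (at 0)"
    using has_real_derivative_along_axis[of f x 0 i] assms(1) by simp
  then have "((\<lambda>t. (f (x + t *\<^sub>R axis i 1) - f x) / t) \<longlongrightarrow> pd i f x) (at 0)"
    unfolding DERIV_def by simp
  then show ?thesis
    using assms(2) by (rule filterlim_compose)
qed

lemma abs_difference_quotient_le:
  fixes f :: "real^3 \<Rightarrow> real"
  assumes "\<And>y. f differentiable at y" "\<And>y. \<bar>pd i f y\<bar> \<le> M"
    and supp: "\<And>x. R \<le> norm x \<Longrightarrow> f x = 0" and "0 < h" "h \<le> 1"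
  shows "\<bar>(f (x + h *\<^sub>R axis i 1) - f x) / h\<bar> \<le> M * indicator (cball 0 (R + 1)) x"
proof (cases "norm x \<le> R + 1")
  case True
  then show ?thesis
    using abs_diff_along_axis_le[OF assms(1,2), of x h] assms(4) by (simp add: divide_le_eq)
next
  case False
  then have "R \<le> norm (x + h *\<^sub>R axis i 1)"
    using norm_triangle_ineq2[of x "- h *\<^sub>R axis i 1"] assms(4,5) by simp
  then show ?thesis
    using False supp[of x] supp[of "x + h *\<^sub>R axis i 1"] by simp
qed

text \<open>The difference quotients of \<open>f\<close> in direction \<open>e\<^sub>i\<close> integrate to zero by translation
  invariance and are dominated by \<open>sup \<bar>\<partial>\<^sub>i f\<bar>\<close> on a ball.\<close>

lemma
  fixes f :: "real^3 \<Rightarrow> real"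
  assumes C1: "\<And>x. C1_at f x" and supp: "\<And>x. R \<le> norm x \<Longrightarrow> f x = 0"
  shows integrable_pd_compact_support: "integrable lborel (pd i f)"
    and integral_pd_compact_support: "(\<integral>x. pd i f x \<partial>lborel) = 0"
proof -
  have cont_f: "continuous_on UNIV f"
    using C1 by (rule continuous_on_C1_at)
  obtain M where M: "\<And>x. \<bar>pd i f x\<bar> \<le> M"
    using bounded_pd_compact_support[OF C1 supp] by blast
  define h :: "nat \<Rightarrow> real" where "h n = 1 / Suc n" for n
  have h: "0 < h n" "h n \<le> 1" for n
    unfolding h_def by auto
  have lim_h: "filterlim h (at 0) sequentially"
    unfolding filterlim_at h_def using LIMSEQ_Suc[OF lim_const_over_n[of 1]] by auto
  define q where "q n x = (f (x + h n *\<^sub>R axis i 1) - f x) / h n" for n x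
  have int_q: "(\<integral>x. q n x \<partial>lborel) = 0" for n
    using lborel_integral_translate[OF integrable_compact_support[OF cont_f supp], where c = "h n *\<^sub>R axis i 1"]
      integrable_compact_support[OF cont_f supp]
    unfolding q_def by (simp add: add.commute)
  have lim_q: "(\<lambda>n. q n x) \<longlonglongrightarrow> pd i f x" for x
    unfolding q_def using C1_at_differentiable[OF C1] lim_h by (rule difference_quotients_tendsto_pd)
  have dom_q: "norm (q n x) \<le> M * indicator (cball 0 (R + 1)) x" for n x
    using abs_difference_quotient_le[OF C1_at_differentiable[OF C1] M supp h[of n]] by (simp add: q_def)
  have "continuous_on UNIV (q n)" for n
    unfolding q_def using h[of n]
    by (intro continuous_intros continuous_on_compose2[OF cont_f]) auto
  then have meas_q: "q n \<in> borel_measurable lborel" for n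
    by (simp add: borel_measurable_continuous_onI)
  have meas_pd: "pd i f \<in> borel_measurable lborel"
    using borel_measurable_continuous_onI[OF continuous_on_pd_C1_at[OF C1]] by simp
  have dom: "integrable lborel (\<lambda>x. M * indicator (cball 0 (R + 1)) x)"
    using emeasure_lborel_cball_finite by (intro integrable_mult_right integrable_real_indicator) auto
  show "integrable lborel (pd i f)"
    by (rule integrable_dominated_convergence[where s = q, OF meas_pd meas_q dom]) (use lim_q dom_q in auto)
  have "(\<lambda>n. \<integral>x. q n x \<partial>lborel) \<longlonglongrightarrow> (\<integral>x. pd i f x \<partial>lborel)"
    by (rule integral_dominated_convergence[where s = q, OF meas_pd meas_q dom]) (use lim_q dom_q in auto)
  then show "(\<integral>x. pd i f x \<partial>lborel) = 0"
    unfolding int_q by (simp add: LIMSEQ_const_iff)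
qed

lemma
  fixes H :: "real^3 \<Rightarrow> real^3"
  assumes "\<And>j x. C1_at (\<lambda>y. H y $ j) x" "\<And>x. R \<le> norm x \<Longrightarrow> H x = 0"
  shows integrable_div3_compact_support: "integrable lborel (div3 H)"
    and integral_div3_compact_support: "(\<integral>x. div3 H x \<partial>lborel) = 0"
proof -
  have supp: "\<And>x. R \<le> norm x \<Longrightarrow> H x $ j = 0" for j
    using assms(2) by simp
  have "integrable lborel (pd j (\<lambda>y. H y $ j))" "(\<integral>x. pd j (\<lambda>y. H y $ j) x \<partial>lborel) = 0" for j
    using integrable_pd_compact_support[OF assms(1) supp] integral_pd_compact_support[OF assms(1) supp]
    by auto
  then show "integrable lborel (div3 H)" "(\<integral>x. div3 H x \<partial>lborel) = 0"
    unfolding div3_def[abs_def] by auto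
qed

section \<open>\<open>C\<^sup>1\<close> cut-off functions\<close>

definition sq_pos :: "real \<Rightarrow> real" where
  "sq_pos s = (max 0 s)\<^sup>2"

lemma has_real_derivative_sq_pos: "(sq_pos has_real_derivative 2 * max 0 s) (at s)"
proof -
  consider "s > 0" | "s < 0" | "s = 0" by linarith
  then show ?thesis
  proof cases
    case 1
    have "((\<lambda>t. t\<^sup>2) has_real_derivative 2 * s) (at s)"
      by (auto intro!: derivative_eq_intros)
    then have "(sq_pos has_real_derivative 2 * s) (at s)"
      by (rule has_field_derivative_transform_within_open[of _ _ _ "{0<..}"])
        (use 1 in \<open>auto simp: sq_pos_def\<close>)
    then show ?thesis using 1 by simp
  next
    case 2
    have "((\<lambda>t. 0) has_real_derivative 0) (at s)"
      by simp
    then have "(sq_pos has_real_derivative 0) (at s)"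
      by (rule has_field_derivative_transform_within_open[of _ _ _ "{..<0}"])
        (use 2 in \<open>auto simp: sq_pos_def\<close>)
    then show ?thesis using 2 by simp
  next
    case 3
    have "(sq_pos (0 + h) - sq_pos 0) / h = max 0 h" for h
      by (cases "h > 0") (simp_all add: sq_pos_def power2_eq_square)
    moreover have "((\<lambda>h. max 0 h) \<longlongrightarrow> 0) (at (0::real))"
      using tendsto_max[OF tendsto_const tendsto_ident_at, of 0 0 UNIV] by simp
    ultimately show ?thesis
      using 3 unfolding DERIV_def by simp
  qed
qed

text \<open>\<open>C\<^sup>1\<close> cut-offs suffice throughout, so a quadratic spline replaces the usual smooth
  bump functions.\<close>

definition ramp :: "real \<Rightarrow> real" where
  "ramp s = 2 * sq_pos s - 4 * sq_pos (s - 1/2) + 2 * sq_pos (s - 1)"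

definition ramp' :: "real \<Rightarrow> real" where
  "ramp' s = 4 * max 0 s - 8 * max 0 (s - 1/2) + 4 * max 0 (s - 1)"

lemma has_real_derivative_ramp: "(ramp has_real_derivative ramp' s) (at s)"
proof -
  have "((\<lambda>t. t - a) has_real_derivative 1) (at s)" for a
    by (auto intro!: derivative_eq_intros)
  then have "((\<lambda>t. sq_pos (t - a)) has_real_derivative 2 * max 0 (s - a)) (at s)" for a
    using DERIV_chain2[OF has_real_derivative_sq_pos] by fastforce
  from this[of 0] this[of "1/2"] this[of 1] show ?thesis
    unfolding ramp_def[abs_def] ramp'_def by (auto intro!: derivative_eq_intros)
qed

lemma continuous_on_ramp': "continuous_on UNIV ramp'"
  unfolding ramp'_def by (intro continuous_intros)

lemma ramp_eq_0: "s \<le> 0 \<Longrightarrow> ramp s = 0"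
  unfolding ramp_def sq_pos_def by (simp add: max_def)

lemma ramp_eq_1: "1 \<le> s \<Longrightarrow> ramp s = 1"
  unfolding ramp_def sq_pos_def by (simp add: max_def power2_eq_square algebra_simps)

lemma ramp'_eq_0: "s \<le> 0 \<or> 1 \<le> s \<Longrightarrow> ramp' s = 0"
  unfolding ramp'_def by (auto simp: max_def)

lemma ramp'_bounds: "0 \<le> ramp' s" "ramp' s \<le> 2"
  unfolding ramp'_def by (auto simp: max_def)

lemma ramp_bounds: "0 \<le> ramp s" "ramp s \<le> 1"
proof -
  consider "s \<le> 0" | "0 \<le> s" "s \<le> 1/2" | "1/2 \<le> s" "s \<le> 1" | "1 \<le> s"
    by linarith
  then have "0 \<le> ramp s \<and> ramp s \<le> 1"
  proof cases
    case 2
    have "s\<^sup>2 \<le> (1/2)\<^sup>2"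
      using 2 by (intro power_mono) auto
    moreover have "ramp s = 2 * s\<^sup>2"
      using 2 unfolding ramp_def sq_pos_def by (simp add: max_def)
    ultimately show ?thesis
      by (simp add: power2_eq_square)
  next
    case 3
    have "(1 - s)\<^sup>2 \<le> (1/2)\<^sup>2"
      using 3 by (intro power_mono) auto
    moreover have "ramp s = 1 - 2 * (1 - s)\<^sup>2"
      using 3 unfolding ramp_def sq_pos_def by (simp add: max_def power2_eq_square algebra_simps)
    ultimately show ?thesis
      by (simp add: power2_eq_square)
  qed (auto simp: ramp_eq_0 ramp_eq_1)
  then show "0 \<le> ramp s" "ramp s \<le> 1"
    by auto
qed

lemma has_real_derivative_ramp_layer:
  "((\<lambda>s. ramp (- s / \<epsilon> - 1)) has_real_derivative ramp' (- s / \<epsilon> - 1) * (- 1 / \<epsilon>)) (at s)"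
proof -
  have "((\<lambda>s. - s / \<epsilon>) has_real_derivative - 1 / \<epsilon>) (at s)"
    using DERIV_cdivide[OF DERIV_minus[OF DERIV_ident]] by simp
  then have "((\<lambda>s. - s / \<epsilon> - 1) has_real_derivative - 1 / \<epsilon>) (at s)"
    using DERIV_diff[OF _ DERIV_const[of 1]] by fastforce
  then show ?thesis
    by (rule DERIV_chain2[OF has_real_derivative_ramp])
qed

definition bump :: "real^3 \<Rightarrow> real \<Rightarrow> real^3 \<Rightarrow> real" where
  "bump x0 r y = ramp (inverse (3 * r\<^sup>2) * (4 * r\<^sup>2 - (y - x0) \<bullet> (y - x0)))"

lemma C1_at_bump: "C1_at (bump x0 r) x"
proof -
  have "C1_at (\<lambda>y. (y - x0) \<bullet> (y - x0)) x"
    by (rule C1_at_intro[of UNIV _ _ "\<lambda>y v. v \<bullet> (y - x0) + (y - x0) \<bullet> v"])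
      (auto intro!: derivative_eq_intros continuous_intros)
  then have "C1_at (\<lambda>y. inverse (3 * r\<^sup>2) * (4 * r\<^sup>2 - (y - x0) \<bullet> (y - x0))) x"
    by (intro C1_at_mult C1_at_diff C1_at_const)
  then show ?thesis
    unfolding bump_def[abs_def] by (rule C1_at_compose[OF _ has_real_derivative_ramp continuous_on_ramp'])
qed

lemma bump_eq_1:
  assumes "r > 0" "dist y x0 \<le> r"
  shows "bump x0 r y = 1"
proof -
  have "(y - x0) \<bullet> (y - x0) \<le> r\<^sup>2"
    using assms by (simp add: dist_norm power2_norm_eq_inner[symmetric] power_mono)
  then show ?thesis
    unfolding bump_def using assms(1) by (intro ramp_eq_1) (simp add: field_simps)
qed

lemma bump_eq_0:
  assumes "r > 0" "2 * r \<le> dist y x0"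
  shows "bump x0 r y = 0"
proof -
  have "(2 * r)\<^sup>2 \<le> (dist y x0)\<^sup>2"
    using assms by (intro power_mono) auto
  then have "4 * r\<^sup>2 \<le> (y - x0) \<bullet> (y - x0)"
    by (simp add: dist_norm power2_norm_eq_inner power_mult_distrib)
  then show ?thesis
    unfolding bump_def using assms(1)
    by (intro ramp_eq_0 mult_nonneg_nonpos) auto
qed

section \<open>Localising the divergence theorem\<close>

text \<open>Bounded divergence makes \<open>div G\<close> integrable over \<open>\<Omega>\<close>, although \<open>G\<close> is only \<open>C\<^sup>1\<close>
  in the interior.\<close>

definition tangential_field :: "(real^3) set \<Rightarrow> (real^3 \<Rightarrow> real^3) \<Rightarrow> (real^3 \<Rightarrow> real^3) \<Rightarrow> bool" where
  "tangential_field \<Omega> \<nu> G \<longleftrightarrow>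
     continuous_on (closure \<Omega>) G \<and> (\<forall>j. \<forall>x\<in>\<Omega>. C1_at (\<lambda>y. G y $ j) x) \<and>
     (\<exists>M. \<forall>x\<in>\<Omega>. \<bar>div3 G x\<bar> \<le> M) \<and> (\<forall>x\<in>frontier \<Omega>. \<nu> x \<bullet> G x = 0)"

definition div_integral :: "(real^3) set \<Rightarrow> (real^3 \<Rightarrow> real^3) \<Rightarrow> real" where
  "div_integral \<Omega> G = (\<integral>x. indicator \<Omega> x * div3 G x \<partial>lborel)"

definition div_theorem_near :: "(real^3) set \<Rightarrow> (real^3 \<Rightarrow> real^3) \<Rightarrow> real^3 \<Rightarrow> real \<Rightarrow> bool" where
  "div_theorem_near \<Omega> \<nu> y \<rho> \<longleftrightarrow>
     (\<forall>G. tangential_field \<Omega> \<nu> G \<longrightarrow> (\<forall>x\<in>closure \<Omega>. \<rho> \<le> dist x y \<longrightarrow> G x = 0) \<longrightarrow>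
        div_integral \<Omega> G = 0)"

lemma bounded_on_closure:
  fixes f :: "real^3 \<Rightarrow> 'b::real_normed_vector"
  assumes "bounded \<Omega>" "continuous_on (closure \<Omega>) f"
  obtains B where "\<And>x. x \<in> closure \<Omega> \<Longrightarrow> norm (f x) \<le> B"
proof -
  have "bounded (f ` closure \<Omega>)"
    using assms by (intro compact_imp_bounded compact_continuous_image) (auto simp: compact_closure)
  then show thesis
    using that unfolding bounded_iff by blast
qed

lemma div3_eq_0_open: "open U \<Longrightarrow> x \<in> U \<Longrightarrow> \<forall>z\<in>U. G z = 0 \<Longrightarrow> div3 G x = 0"
  unfolding div3_def by (auto intro!: sum.neutral pd_eq_0_open)

lemma div3_add:
  assumes "\<And>j. C1_at (\<lambda>y. G y $ j) x" "\<And>j. C1_at (\<lambda>y. K y $ j) x"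
  shows "div3 (\<lambda>y. G y + K y) x = div3 G x + div3 K x"
  unfolding div3_def using assms
  by (simp add: pd_add C1_at_differentiable sum.distrib)

lemma div3_scaleR:
  assumes "C1_at \<theta> x" "\<And>j. C1_at (\<lambda>y. G y $ j) x"
  shows "div3 (\<lambda>y. \<theta> y *\<^sub>R G y) x = \<theta> x * div3 G x + grad \<theta> x \<bullet> G x"
  unfolding div3_def grad_def inner_vec_def using assms
  by (simp add: pd_mult C1_at_differentiable sum.distrib sum_distrib_left)

lemma continuous_on_grad: "(\<And>x. x \<in> S \<Longrightarrow> C1_at f x) \<Longrightarrow> continuous_on S (grad f)"
  unfolding grad_def by (intro continuous_on_vec_lambda continuous_on_pd_C1_at)

lemma tangential_field_scaleR:
  assumes "bounded \<Omega>" "\<And>x. C1_at \<theta> x" "tangential_field \<Omega> \<nu> G"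
  shows "tangential_field \<Omega> \<nu> (\<lambda>y. \<theta> y *\<^sub>R G y)"
proof -
  have cont_G: "continuous_on (closure \<Omega>) G" and C1_G: "\<forall>j. \<forall>x\<in>\<Omega>. C1_at (\<lambda>y. G y $ j) x"
    and bc: "\<forall>x\<in>frontier \<Omega>. \<nu> x \<bullet> G x = 0"
    using assms(3) unfolding tangential_field_def by auto
  obtain M where M: "\<forall>x\<in>\<Omega>. \<bar>div3 G x\<bar> \<le> M"
    using assms(3) unfolding tangential_field_def by auto
  have cont_\<theta>: "continuous_on (closure \<Omega>) \<theta>"
    using assms(2) by (rule continuous_on_C1_at)
  obtain B\<^sub>\<theta> where B\<^sub>\<theta>: "\<And>x. x \<in> closure \<Omega> \<Longrightarrow> norm (\<theta> x) \<le> B\<^sub>\<theta>"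
    using bounded_on_closure[OF assms(1) cont_\<theta>] by blast
  have "continuous_on (closure \<Omega>) (\<lambda>x. grad \<theta> x \<bullet> G x)"
    using continuous_on_grad[OF assms(2)] cont_G by (intro continuous_intros)
  then obtain B where B: "\<And>x. x \<in> closure \<Omega> \<Longrightarrow> norm (grad \<theta> x \<bullet> G x) \<le> B"
    using bounded_on_closure[OF assms(1)] by blast
  have "\<bar>div3 (\<lambda>y. \<theta> y *\<^sub>R G y) x\<bar> \<le> B\<^sub>\<theta> * M + B" if x: "x \<in> \<Omega>" for x
  proof -
    have x': "x \<in> closure \<Omega>"
      using x closure_subset[of \<Omega>] by blast
    have "\<bar>div3 (\<lambda>y. \<theta> y *\<^sub>R G y) x\<bar> = \<bar>\<theta> x * div3 G x + grad \<theta> x \<bullet> G x\<bar>"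
      using div3_scaleR[OF assms(2)] C1_G x by simp
    also have "\<dots> \<le> \<bar>\<theta> x * div3 G x\<bar> + \<bar>grad \<theta> x \<bullet> G x\<bar>"
      by (rule abs_triangle_ineq)
    also have "\<dots> \<le> B\<^sub>\<theta> * M + B"
      unfolding abs_mult using B\<^sub>\<theta>[OF x'] B[OF x'] M x by (intro add_mono mult_mono) auto
    finally show ?thesis .
  qed
  moreover have "continuous_on (closure \<Omega>) (\<lambda>y. \<theta> y *\<^sub>R G y)"
    using cont_\<theta> cont_G by (intro continuous_intros)
  moreover have "C1_at (\<lambda>y. (\<theta> y *\<^sub>R G y) $ j) x" if "x \<in> \<Omega>" for j x
    using C1_at_mult[OF assms(2)] C1_G that by simp
  moreover have "\<nu> x \<bullet> (\<theta> x *\<^sub>R G x) = 0" if "x \<in> frontier \<Omega>" for x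
    using bc that by simp
  ultimately show ?thesis
    unfolding tangential_field_def by blast
qed

lemma integrable_indicator_div3:
  assumes "open \<Omega>" "bounded \<Omega>" "tangential_field \<Omega> \<nu> G"
  shows "integrable lborel (\<lambda>x. indicator \<Omega> x * div3 G x)"
proof -
  have C1_G: "\<forall>j. \<forall>x\<in>\<Omega>. C1_at (\<lambda>y. G y $ j) x"
    using assms(3) unfolding tangential_field_def by auto
  obtain M where M: "\<forall>x\<in>\<Omega>. \<bar>div3 G x\<bar> \<le> M"
    using assms(3) unfolding tangential_field_def by auto
  have "continuous_on \<Omega> (div3 G)"
    unfolding div3_def using C1_G by (intro continuous_intros continuous_on_pd_C1_at) auto
  then have "(\<lambda>x. indicator \<Omega> x *\<^sub>R div3 G x) \<in> borel_measurable borel"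
    using assms(1) by (intro borel_measurable_continuous_on_indicator) auto
  moreover obtain R where "\<Omega> \<subseteq> cball 0 R"
    using bounded_subset_ballD[OF assms(2), of 0] ball_subset_cball by blast
  ultimately show ?thesis
    using M by (intro integrable_bounded_support[of _ "max M 0" R])
      (auto simp: indicator_def le_max_iff_disj)
qed

lemma div_integral_split:
  assumes "open \<Omega>" "bounded \<Omega>" "\<And>x. C1_at \<theta> x" "tangential_field \<Omega> \<nu> G"
  shows "div_integral \<Omega> G = div_integral \<Omega> (\<lambda>y. \<theta> y *\<^sub>R G y) + div_integral \<Omega> (\<lambda>y. (1 - \<theta> y) *\<^sub>R G y)"
proof -
  have C1_G: "\<forall>j. \<forall>x\<in>\<Omega>. C1_at (\<lambda>y. G y $ j) x"
    using assms(4) unfolding tangential_field_def by auto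
  have C1_1\<theta>: "C1_at (\<lambda>y. 1 - \<theta> y) x" for x
    using assms(3) by (intro C1_at_diff C1_at_const)
  have "div3 G x = div3 (\<lambda>y. \<theta> y *\<^sub>R G y) x + div3 (\<lambda>y. (1 - \<theta> y) *\<^sub>R G y) x"
    if "x \<in> \<Omega>" for x
  proof -
    have "div3 G x = div3 (\<lambda>y. \<theta> y *\<^sub>R G y + (1 - \<theta> y) *\<^sub>R G y) x"
      by (simp add: algebra_simps)
    also have "\<dots> = div3 (\<lambda>y. \<theta> y *\<^sub>R G y) x + div3 (\<lambda>y. (1 - \<theta> y) *\<^sub>R G y) x"
      using that C1_G assms(3) C1_1\<theta> by (intro div3_add) (auto intro: C1_at_mult)
    finally show ?thesis .
  qed
  then have "(\<lambda>x. indicator \<Omega> x * div3 G x) = (\<lambda>x. indicator \<Omega> x * div3 (\<lambda>y. \<theta> y *\<^sub>R G y) x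
      + indicator \<Omega> x * div3 (\<lambda>y. (1 - \<theta> y) *\<^sub>R G y) x)"
    by (auto simp: indicator_def)
  moreover have "integrable lborel (\<lambda>x. indicator \<Omega> x * div3 (\<lambda>y. \<theta> y *\<^sub>R G y) x)"
    and "integrable lborel (\<lambda>x. indicator \<Omega> x * div3 (\<lambda>y. (1 - \<theta> y) *\<^sub>R G y) x)"
    using assms C1_1\<theta> by (auto intro!: integrable_indicator_div3 tangential_field_scaleR)
  ultimately show ?thesis
    unfolding div_integral_def by simp
qed

lemma div_integral_eq_0_finite_cover:
  assumes "open \<Omega>" "bounded \<Omega>" "finite S"
    and "\<And>y. y \<in> S \<Longrightarrow> rad y > 0 \<and> div_theorem_near \<Omega> \<nu> y (rad y)"
    and "tangential_field \<Omega> \<nu> G" "\<forall>x\<in>closure \<Omega>. G x \<noteq> 0 \<longrightarrow> (\<exists>y\<in>S. dist x y < rad y / 2)"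
  shows "div_integral \<Omega> G = 0"
  using assms(3-6)
proof (induction S arbitrary: G rule: finite_induct)
  case empty
  have "\<forall>z\<in>\<Omega>. G z = 0"
    using empty.prems(3) closure_subset[of \<Omega>] by blast
  then have "(\<lambda>x. indicator \<Omega> x * div3 G x) = (\<lambda>x. 0)"
    using div3_eq_0_open[OF assms(1), of _ G] by (auto simp: indicator_def fun_eq_iff)
  then show ?case
    unfolding div_integral_def by simp
next
  case (insert y S)
  define \<theta> where "\<theta> = bump y (rad y / 2)"
  have rad: "rad y > 0" and near: "div_theorem_near \<Omega> \<nu> y (rad y)"
    using insert.prems(1) by auto
  have C1_\<theta>: "C1_at \<theta> x" for x
    unfolding \<theta>_def by (rule C1_at_bump)
  have "\<theta> x = 0" if "rad y \<le> dist x y" for x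
    unfolding \<theta>_def using bump_eq_0[of "rad y / 2" x y] rad that by simp
  then have "div_integral \<Omega> (\<lambda>z. \<theta> z *\<^sub>R G z) = 0"
    using near tangential_field_scaleR[OF assms(2) C1_\<theta> insert.prems(2)]
    unfolding div_theorem_near_def by simp
  moreover have "div_integral \<Omega> (\<lambda>z. (1 - \<theta> z) *\<^sub>R G z) = 0"
  proof (rule insert.IH)
    show "tangential_field \<Omega> \<nu> (\<lambda>z. (1 - \<theta> z) *\<^sub>R G z)"
      using C1_\<theta> by (intro tangential_field_scaleR[OF assms(2) _ insert.prems(2)] C1_at_diff C1_at_const)
    show "\<forall>x\<in>closure \<Omega>. (1 - \<theta> x) *\<^sub>R G x \<noteq> 0 \<longrightarrow> (\<exists>y\<in>S. dist x y < rad y / 2)"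
    proof (intro ballI impI)
      fix x assume x: "x \<in> closure \<Omega>" "(1 - \<theta> x) *\<^sub>R G x \<noteq> 0"
      then have "G x \<noteq> 0" "\<theta> x \<noteq> 1"
        by auto
      then have "\<not> dist x y < rad y / 2"
        using bump_eq_1[of "rad y / 2" x y] rad unfolding \<theta>_def by auto
      then show "\<exists>y\<in>S. dist x y < rad y / 2"
        using insert.prems(3) x(1) \<open>G x \<noteq> 0\<close> by auto
    qed
  qed (use insert.prems(1) in auto)
  ultimately show ?case
    using div_integral_split[OF assms(1,2) C1_\<theta> insert.prems(2)] by simp
qed

lemma div_theorem_near_interior:
  assumes "open \<Omega>" "bounded \<Omega>" "cball y \<rho> \<subseteq> \<Omega>"
  shows "div_theorem_near \<Omega> \<nu> y \<rho>"
  unfolding div_theorem_near_def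
proof (intro allI impI)
  fix G assume G: "tangential_field \<Omega> \<nu> G" and supp: "\<forall>x\<in>closure \<Omega>. \<rho> \<le> dist x y \<longrightarrow> G x = 0"
  define H where "H z = (if z \<in> \<Omega> then G z else 0)" for z
  have H_comp: "(\<lambda>z. H z $ j) = (\<lambda>z. if z \<in> \<Omega> then G z $ j else 0)" for j
    unfolding H_def by auto
  have vanish: "\<exists>U. open U \<and> x \<in> U \<and> (\<forall>z\<in>U \<inter> \<Omega>. G z = 0)" if "x \<notin> \<Omega>" for x
  proof (intro exI conjI)
    show "open {z. \<rho> < dist z y}"
      by (intro open_Collect_less continuous_intros)
    have "x \<notin> cball y \<rho>"
      using that assms(3) by blast
    then show "x \<in> {z. \<rho> < dist z y}"
      by (simp add: dist_commute)
    show "\<forall>z\<in>{z. \<rho> < dist z y} \<inter> \<Omega>. G z = 0"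
      using supp closure_subset[of \<Omega>] by force
  qed
  have C1_H: "C1_at (\<lambda>z. H z $ j) x"
    and pd_H: "pd j (\<lambda>z. H z $ j) x = indicator \<Omega> x * pd j (\<lambda>z. G z $ j) x" for j x
  proof -
    have C1_G: "\<And>x. x \<in> \<Omega> \<Longrightarrow> C1_at (\<lambda>z. G z $ j) x"
      using G unfolding tangential_field_def by blast
    have "\<exists>U. open U \<and> x \<in> U \<and> (\<forall>z\<in>U \<inter> \<Omega>. G z $ j = 0)" if "x \<notin> \<Omega>" for x
      using vanish[OF that] by force
    from C1_at_zero_extension[OF assms(1) C1_G this] pd_zero_extension[OF assms(1) C1_G this]
    show "C1_at (\<lambda>z. H z $ j) x" "pd j (\<lambda>z. H z $ j) x = indicator \<Omega> x * pd j (\<lambda>z. G z $ j) x"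
      unfolding H_comp by auto
  qed
  have div_H: "div3 H x = indicator \<Omega> x * div3 G x" for x
    unfolding div3_def pd_H by (simp add: sum_distrib_left)
  obtain R where "\<Omega> \<subseteq> ball 0 R"
    using bounded_subset_ballD[OF assms(2)] by blast
  then have "H x = 0" if "R \<le> norm x" for x
    using that unfolding H_def by auto
  then show "div_integral \<Omega> G = 0"
    using integral_div3_compact_support[OF C1_H] unfolding div_integral_def div_H by blast
qed

section \<open>Boundary charts\<close>

lemma small_near_zero_set:
  fixes g \<phi> :: "real^3 \<Rightarrow> real"
  assumes "compact K" "continuous_on K g" "continuous_on K \<phi>" "\<forall>x\<in>K. \<phi> x = 0 \<longrightarrow> g x = 0" "\<delta> > 0"
  obtains \<eta> where "\<eta> > 0" "\<forall>x\<in>K. \<bar>\<phi> x\<bar> < \<eta> \<longrightarrow> \<bar>g x\<bar> < \<delta>"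
proof -
  define D where "D = K \<inter> (\<lambda>x. \<bar>g x\<bar>) -` {\<delta>..}"
  have "closed D"
    unfolding D_def using assms(1,2)
    by (intro continuous_closed_preimage) (auto intro: continuous_intros simp: compact_imp_closed)
  then have "compact D"
    using compact_Int_closed[OF assms(1)] unfolding D_def by (metis Int_absorb1 inf_le1)
  show thesis
  proof (cases "D = {}")
    case True
    then show ?thesis
      using that[of 1] unfolding D_def by force
  next
    case False
    have "continuous_on D (\<lambda>x. \<bar>\<phi> x\<bar>)"
      using assms(3) unfolding D_def by (intro continuous_intros) (auto intro: continuous_on_subset)
    then obtain x\<^sub>m where x\<^sub>m: "x\<^sub>m \<in> D" "\<forall>y\<in>D. \<bar>\<phi> x\<^sub>m\<bar> \<le> \<bar>\<phi> y\<bar>"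
      using continuous_attains_inf[OF \<open>compact D\<close> False] by blast
    have "\<phi> x\<^sub>m \<noteq> 0"
      using x\<^sub>m(1) assms(4,5) unfolding D_def by auto
    moreover have "\<bar>g x\<bar> < \<delta>" if "x \<in> K" "\<bar>\<phi> x\<bar> < \<bar>\<phi> x\<^sub>m\<bar>" for x
      using that x\<^sub>m(2) unfolding D_def by force
    ultimately show ?thesis
      using that[of "\<bar>\<phi> x\<^sub>m\<bar>"] by auto
  qed
qed

lemma measure_disjoint_translates_le:
  fixes L :: "'a::euclidean_space set"
  assumes "L \<in> lmeasurable" "B \<in> lmeasurable" "finite K"
    and "disjoint_family_on (\<lambda>k. (+) (a k) ` L) K" "\<And>k. k \<in> K \<Longrightarrow> (+) (a k) ` L \<subseteq> B"
  shows "card K * measure lebesgue L \<le> measure lebesgue B"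
proof -
  have T: "(+) (a k) ` L \<in> lmeasurable" for k
    using measurable_translation[OF assms(1)] .
  have "(\<lambda>k. (+) (a k) ` L) ` K \<subseteq> sets lebesgue"
    using T fmeasurableD by blast
  then have "measure lebesgue (\<Union>k\<in>K. (+) (a k) ` L) = (\<Sum>k\<in>K. measure lebesgue ((+) (a k) ` L))"
    by (rule measure_finite_Union[OF assms(3) _ assms(4)]) (use fmeasurableD2[OF T] in simp)
  also have "\<dots> = card K * measure lebesgue L"
    by (simp add: measure_translation)
  finally have "card K * measure lebesgue L = measure lebesgue (\<Union>k\<in>K. (+) (a k) ` L)" ..
  also have "\<dots> \<le> measure lebesgue B"
    using assms(2,3,5) T by (intro measure_mono_fmeasurable) (auto intro: fmeasurableD)
  finally show ?thesis .
qed

locale boundary_chart =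
  fixes \<Omega> :: "(real^3) set" and \<nu> :: "real^3 \<Rightarrow> real^3" and \<phi> :: "real^3 \<Rightarrow> real"
    and x0 :: "real^3" and \<rho> :: real and k :: 3 and c :: real
  assumes open_\<Omega>: "open \<Omega>" and bounded_\<Omega>: "bounded \<Omega>"
    and C1_\<phi>: "\<And>x. x \<in> ball x0 \<rho> \<Longrightarrow> C1_at \<phi> x"
    and chart: "\<Omega> \<inter> ball x0 \<rho> = {x \<in> ball x0 \<rho>. \<phi> x < 0}"
    and normal: "\<And>x. x \<in> frontier \<Omega> \<inter> ball x0 \<rho> \<Longrightarrow> \<nu> x = grad \<phi> x /\<^sub>R norm (grad \<phi> x)"
    and c_pos: "0 < c"
    and pd_ge: "\<And>x. x \<in> ball x0 \<rho> \<Longrightarrow> c \<le> \<bar>pd k \<phi> x\<bar>"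
begin

definition layer :: "real \<Rightarrow> (real^3) set" where
  "layer \<delta> = {x \<in> ball x0 \<rho>. - \<delta> < \<phi> x \<and> \<phi> x < 0}"

lemma continuous_on_\<phi>: "continuous_on (ball x0 \<rho>) \<phi>"
  using C1_\<phi> by (rule continuous_on_C1_at)

lemma open_layer: "open (layer \<delta>)"
proof -
  have "layer \<delta> = ball x0 \<rho> \<inter> \<phi> -` {- \<delta><..<0}"
    unfolding layer_def by auto
  then show ?thesis
    using continuous_open_preimage[OF continuous_on_\<phi>] by simp
qed

lemma layer_lmeasurable: "layer \<delta> \<in> lmeasurable"
  using open_layer by (rule lmeasurable_open[rotated]) (auto simp: layer_def intro: bounded_subset[OF bounded_ball])

text \<open>\<open>\<phi>\<close> grows at rate at least \<open>c\<close> in direction \<open>e\<^sub>k\<close>, so shifts of the layer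
  \<open>-\<delta> < \<phi> < 0\<close> by distinct multiples of \<open>(\<delta> / c) e\<^sub>k\<close> are disjoint; about \<open>c / \<delta>\<close> of them fit
  into \<open>ball x0 (\<rho> + 1)\<close>.\<close>

lemma disjoint_layer_translates:
  assumes "0 < \<delta>"
  shows "disjoint_family_on (\<lambda>n::nat. (+) ((real n * (\<delta> / c)) *\<^sub>R axis k 1) ` layer \<delta>) UNIV"
  unfolding disjoint_family_on_def
proof (intro ballI impI)
  fix m n :: nat assume "m \<noteq> n"
  show "(+) ((real m * (\<delta> / c)) *\<^sub>R axis k 1) ` layer \<delta> \<inter> (+) ((real n * (\<delta> / c)) *\<^sub>R axis k 1) ` layer \<delta> = {}"
  proof (rule ccontr)
    assume "(+) ((real m * (\<delta> / c)) *\<^sub>R axis k 1) ` layer \<delta> \<inter> (+) ((real n * (\<delta> / c)) *\<^sub>R axis k 1) ` layer \<delta> \<noteq> {}"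
    then obtain x x' where x: "x \<in> layer \<delta>" "x' \<in> layer \<delta>"
      and eq: "(real m * (\<delta> / c)) *\<^sub>R axis k 1 + x = (real n * (\<delta> / c)) *\<^sub>R axis k 1 + x'"
      by auto
    let ?t = "(real m - real n) * (\<delta> / c)"
    have "x' = x + ?t *\<^sub>R axis k 1"
      using eq by (simp add: algebra_simps)
    moreover have "c * \<bar>?t\<bar> \<le> \<bar>\<phi> (x + ?t *\<^sub>R axis k 1) - \<phi> x\<bar>"
      if "x + ?t *\<^sub>R axis k 1 \<in> ball x0 \<rho>"
      using abs_diff_along_axis_ge[OF convex_ball _ that] x(1) C1_\<phi> pd_ge C1_at_differentiable
      unfolding layer_def by blast
    ultimately have "c * \<bar>?t\<bar> < \<delta>"
      using x unfolding layer_def by fastforce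
    then have "\<bar>real m - real n\<bar> * \<delta> < \<delta>"
      using c_pos assms by (simp add: abs_mult)
    then have "\<bar>real m - real n\<bar> < 1"
      using assms by (simp add: mult_less_cancel_right2)
    then show False
      using \<open>m \<noteq> n\<close> by linarith
  qed
qed

lemma layer_translate_subset:
  assumes "0 \<le> t" "t \<le> 1"
  shows "(+) (t *\<^sub>R axis k 1) ` layer \<delta> \<subseteq> ball x0 (\<rho> + 1)"
proof
  fix z assume "z \<in> (+) (t *\<^sub>R axis k 1) ` layer \<delta>"
  then obtain x where x: "x \<in> layer \<delta>" "z = t *\<^sub>R axis k 1 + x"
    by auto
  have "norm (t *\<^sub>R axis k (1::real)) \<le> 1"
    using assms by simp
  moreover have "dist x0 x < \<rho>"
    using x(1) unfolding layer_def by simp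
  ultimately show "z \<in> ball x0 (\<rho> + 1)"
    unfolding x(2) using norm_triangle_ineq[of "t *\<^sub>R axis k (1::real)" "x - x0"]
    by (simp add: dist_norm norm_minus_commute algebra_simps)
qed

lemma measure_layer_le:
  assumes "0 < \<delta>" "\<delta> \<le> c / 2"
  shows "measure lebesgue (layer \<delta>) \<le> 2 * measure lebesgue (ball x0 (\<rho> + 1)) * \<delta> / c"
proof -
  define a where "a = \<delta> / c"
  define N where "N = nat \<lfloor>1 / a\<rfloor>"
  have a: "0 < a" "a \<le> 1/2"
    using assms c_pos unfolding a_def by (auto simp: field_simps)
  have "real N = of_int \<lfloor>1 / a\<rfloor>"
    unfolding N_def using a by simp
  then have "real N \<le> 1 / a" "1 / a - 1 < real N"
    by linarith+
  moreover have "1 / (2 * a) \<le> 1 / a - 1"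
    using a by (simp add: field_simps)
  ultimately have N: "real N * a \<le> 1" "1 / (2 * a) \<le> real N"
    using a by (simp_all add: le_divide_eq)
  have "(+) ((real n * a) *\<^sub>R axis k 1) ` layer \<delta> \<subseteq> ball x0 (\<rho> + 1)" if "n \<in> {..<N}" for n
  proof (rule layer_translate_subset)
    have "real n * a \<le> real N * a"
      using that a by (intro mult_right_mono) auto
    with a N(1) show "0 \<le> real n * a" "real n * a \<le> 1"
      by (simp, linarith)
  qed
  moreover have "disjoint_family_on (\<lambda>n. (+) ((real n * a) *\<^sub>R axis k 1) ` layer \<delta>) {..<N}"
    using disjoint_layer_translates[OF assms(1)] unfolding a_def
    by (rule disjoint_family_on_mono[rotated]) simp
  ultimately have "card {..<N} * measure lebesgue (layer \<delta>) \<le> measure lebesgue (ball x0 (\<rho> + 1))"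
    by (intro measure_disjoint_translates_le layer_lmeasurable) auto
  moreover have "1 / (2 * a) * measure lebesgue (layer \<delta>) \<le> real N * measure lebesgue (layer \<delta>)"
    by (rule mult_right_mono[OF N(2)]) simp
  ultimately have "1 / (2 * a) * measure lebesgue (layer \<delta>) \<le> measure lebesgue (ball x0 (\<rho> + 1))"
    by simp
  then show ?thesis
    using a c_pos unfolding a_def by (simp add: field_simps)
qed

lemma grad_inner_eq_0_on_frontier:
  assumes "x \<in> frontier \<Omega> \<inter> ball x0 \<rho>" "\<nu> x \<bullet> v = 0"
  shows "grad \<phi> x \<bullet> v = 0"
proof -
  have "grad \<phi> x $ k \<noteq> 0"
    using pd_ge[of x] c_pos assms(1) unfolding grad_def by auto
  then have "grad \<phi> x \<noteq> 0"
    by auto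
  then show ?thesis
    using assms normal[OF assms(1)] by simp
qed

end

locale boundary_chart_field = boundary_chart +
  fixes G :: "real^3 \<Rightarrow> real^3" and r :: real
  assumes tangential: "tangential_field \<Omega> \<nu> G"
    and r_less: "r < \<rho>"
    and support: "\<And>x. x \<in> closure \<Omega> \<Longrightarrow> r \<le> dist x x0 \<Longrightarrow> G x = 0"
begin

text \<open>\<open>cutoff_field \<epsilon>\<close> is a compactly supported \<open>C\<^sup>1\<close> field on all of \<open>\<real>\<^sup>3\<close> which agrees with
  \<open>G\<close> in \<open>\<Omega>\<close> off the layer \<open>-2\<epsilon> < \<phi> < 0\<close>.\<close>

definition cutoff :: "real \<Rightarrow> real^3 \<Rightarrow> real" where
  "cutoff \<epsilon> y = ramp (- \<phi> y / \<epsilon> - 1)"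

definition cutoff_field :: "real \<Rightarrow> real^3 \<Rightarrow> real^3" where
  "cutoff_field \<epsilon> y = (if y \<in> \<Omega> \<inter> ball x0 \<rho> then cutoff \<epsilon> y *\<^sub>R G y else 0)"

lemma C1_at_G: "x \<in> \<Omega> \<Longrightarrow> C1_at (\<lambda>y. G y $ j) x"
  using tangential unfolding tangential_field_def by blast

lemma C1_at_cutoff:
  assumes "x \<in> ball x0 \<rho>"
  shows "C1_at (cutoff \<epsilon>) x"
proof -
  have "continuous_on UNIV (\<lambda>s. ramp' (- s / \<epsilon> - 1) * (- 1 / \<epsilon>))"
    by (cases "\<epsilon> = 0") (auto intro!: continuous_intros continuous_on_compose2[OF continuous_on_ramp'])
  then show ?thesis
    unfolding cutoff_def[abs_def]
    by (rule C1_at_compose[OF C1_\<phi>[OF assms] has_real_derivative_ramp_layer])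
qed

lemma grad_cutoff:
  "x \<in> ball x0 \<rho> \<Longrightarrow> grad (cutoff \<epsilon>) x = (- ramp' (- \<phi> x / \<epsilon> - 1) / \<epsilon>) *\<^sub>R grad \<phi> x"
  unfolding cutoff_def[abs_def] grad_def
  using pd_compose[OF C1_at_differentiable[OF C1_\<phi>] has_real_derivative_ramp_layer]
  by (simp add: vec_eq_iff)

lemma cutoff_eq_1: "0 < \<epsilon> \<Longrightarrow> \<phi> y \<le> - 2 * \<epsilon> \<Longrightarrow> cutoff \<epsilon> y = 1"
  unfolding cutoff_def by (rule ramp_eq_1) (simp add: field_simps)

lemma cutoff_eq_0: "0 < \<epsilon> \<Longrightarrow> - \<epsilon> \<le> \<phi> y \<Longrightarrow> cutoff \<epsilon> y = 0"
  unfolding cutoff_def by (rule ramp_eq_0) (simp add: field_simps)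

lemma ramp'_layer_eq_0: "0 < \<epsilon> \<Longrightarrow> \<phi> y \<le> - 2 * \<epsilon> \<Longrightarrow> ramp' (- \<phi> y / \<epsilon> - 1) = 0"
  by (rule ramp'_eq_0) (simp add: field_simps)

lemma G_vanishes_near:
  assumes "x \<notin> cball x0 r"
  shows "\<exists>U. open U \<and> x \<in> U \<and> (\<forall>z\<in>U \<inter> \<Omega>. G z = 0)"
proof (intro exI conjI)
  show "open (- cball x0 r)" "x \<in> - cball x0 r"
    using assms by auto
  show "\<forall>z\<in>- cball x0 r \<inter> \<Omega>. G z = 0"
  proof
    fix z assume "z \<in> - cball x0 r \<inter> \<Omega>"
    then have "z \<in> closure \<Omega>" "r \<le> dist z x0"
      using closure_subset[of \<Omega>] by (auto simp: dist_commute)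
    then show "G z = 0"
      by (rule support)
  qed
qed

lemma cutoff_field_vanishes_near:
  assumes "0 < \<epsilon>" "x \<notin> \<Omega> \<inter> ball x0 \<rho>"
  shows "\<exists>U. open U \<and> x \<in> U \<and> (\<forall>z\<in>U \<inter> (\<Omega> \<inter> ball x0 \<rho>). cutoff \<epsilon> z *\<^sub>R G z = 0)"
proof (cases "x \<in> cball x0 r")
  case True
  then have x: "x \<in> ball x0 \<rho>"
    using r_less by auto
  have "\<not> \<phi> x < 0"
  proof
    assume "\<phi> x < 0"
    then have "x \<in> \<Omega> \<inter> ball x0 \<rho>"
      using chart x by blast
    with assms(2) show False ..
  qed
  show ?thesis
  proof (intro exI conjI)
    show "open (ball x0 \<rho> \<inter> \<phi> -` {- \<epsilon><..})"
      using continuous_open_preimage[OF continuous_on_\<phi>] by auto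
    show "x \<in> ball x0 \<rho> \<inter> \<phi> -` {- \<epsilon><..}"
      using x \<open>\<not> \<phi> x < 0\<close> assms(1) by auto
    show "\<forall>z\<in>(ball x0 \<rho> \<inter> \<phi> -` {- \<epsilon><..}) \<inter> (\<Omega> \<inter> ball x0 \<rho>). cutoff \<epsilon> z *\<^sub>R G z = 0"
      using cutoff_eq_0[OF assms(1)] by auto
  qed
next
  case False
  then obtain U where "open U" "x \<in> U" "\<forall>z\<in>U \<inter> \<Omega>. G z = 0"
    using G_vanishes_near by blast
  then show ?thesis
    by (intro exI[of _ U]) auto
qed

lemma cutoff_field_component:
  "(\<lambda>y. cutoff_field \<epsilon> y $ j) = (\<lambda>y. if y \<in> \<Omega> \<inter> ball x0 \<rho> then cutoff \<epsilon> y * G y $ j else 0)"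
  unfolding cutoff_field_def by auto

lemma
  assumes "0 < \<epsilon>"
  shows C1_at_cutoff_field: "C1_at (\<lambda>y. cutoff_field \<epsilon> y $ j) x"
    and pd_cutoff_field: "pd i (\<lambda>y. cutoff_field \<epsilon> y $ j) x =
      (if x \<in> \<Omega> \<inter> ball x0 \<rho> then pd i (\<lambda>y. cutoff \<epsilon> y * G y $ j) x else 0)"
proof -
  have D: "open (\<Omega> \<inter> ball x0 \<rho>)"
    using open_\<Omega> by auto
  have C1: "C1_at (\<lambda>y. cutoff \<epsilon> y * G y $ j) x" if "x \<in> \<Omega> \<inter> ball x0 \<rho>" for x
    using that by (intro C1_at_mult C1_at_cutoff C1_at_G) auto
  have "\<exists>U. open U \<and> x \<in> U \<and> (\<forall>z\<in>U \<inter> (\<Omega> \<inter> ball x0 \<rho>). cutoff \<epsilon> z * G z $ j = 0)"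
    if outside: "x \<notin> \<Omega> \<inter> ball x0 \<rho>" for x
  proof -
    obtain U where U: "open U" "x \<in> U" "\<forall>z\<in>U \<inter> (\<Omega> \<inter> ball x0 \<rho>). cutoff \<epsilon> z *\<^sub>R G z = 0"
      using cutoff_field_vanishes_near[OF assms outside] by blast
    have "cutoff \<epsilon> z * G z $ j = 0" if "z \<in> U \<inter> (\<Omega> \<inter> ball x0 \<rho>)" for z
    proof -
      have "cutoff \<epsilon> z = 0 \<or> G z = 0"
        using U(3) that by auto
      then show ?thesis
        by auto
    qed
    with U(1,2) show ?thesis
      by blast
  qed
  note vanish = this
  show "C1_at (\<lambda>y. cutoff_field \<epsilon> y $ j) x"
    unfolding cutoff_field_component by (rule C1_at_zero_extension[OF D C1 vanish])
  show "pd i (\<lambda>y. cutoff_field \<epsilon> y $ j) x =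
      (if x \<in> \<Omega> \<inter> ball x0 \<rho> then pd i (\<lambda>y. cutoff \<epsilon> y * G y $ j) x else 0)"
    unfolding cutoff_field_component by (rule pd_zero_extension[OF D C1 vanish])
qed

lemma cutoff_field_eq_0: "norm x0 + \<rho> \<le> norm x \<Longrightarrow> cutoff_field \<epsilon> x = 0"
  using norm_triangle_ineq2[of x x0] unfolding cutoff_field_def by (auto simp: dist_norm norm_minus_commute)

lemma
  assumes "0 < \<epsilon>"
  shows integrable_div3_cutoff_field: "integrable lborel (div3 (cutoff_field \<epsilon>))"
    and integral_div3_cutoff_field: "(\<integral>x. div3 (cutoff_field \<epsilon>) x \<partial>lborel) = 0"
  using integrable_div3_compact_support[OF C1_at_cutoff_field[OF assms] cutoff_field_eq_0]
    integral_div3_compact_support[OF C1_at_cutoff_field[OF assms] cutoff_field_eq_0]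
  by blast+

lemma div3_cutoff_field:
  assumes "0 < \<epsilon>" "x \<in> \<Omega> \<inter> ball x0 \<rho>"
  shows "div3 (cutoff_field \<epsilon>) x =
    cutoff \<epsilon> x * div3 G x - ramp' (- \<phi> x / \<epsilon> - 1) / \<epsilon> * (grad \<phi> x \<bullet> G x)"
proof -
  have "div3 (cutoff_field \<epsilon>) x = div3 (\<lambda>y. cutoff \<epsilon> y *\<^sub>R G y) x"
    unfolding div3_def pd_cutoff_field[OF assms(1)] if_P[OF assms(2)] by simp
  also have "\<dots> = cutoff \<epsilon> x * div3 G x + grad (cutoff \<epsilon>) x \<bullet> G x"
    using assms(2) by (intro div3_scaleR C1_at_cutoff C1_at_G) auto
  finally show ?thesis
    using grad_cutoff[of x \<epsilon>] assms(2) by simp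
qed

lemma div3_cutoff_field_outside:
  assumes "0 < \<epsilon>" "x \<notin> \<Omega> \<inter> ball x0 \<rho>"
  shows "div3 (cutoff_field \<epsilon>) x = 0"
  unfolding div3_def pd_cutoff_field[OF assms(1)] if_not_P[OF assms(2)] by simp

lemma div3_G_outside_chart:
  assumes "x \<in> \<Omega>" "x \<notin> ball x0 \<rho>"
  shows "div3 G x = 0"
proof -
  have "x \<notin> cball x0 r"
    using assms(2) r_less by auto
  then obtain U where "open U" "x \<in> U" "\<forall>z\<in>U \<inter> \<Omega>. G z = 0"
    using G_vanishes_near by blast
  then show ?thesis
    using div3_eq_0_open[of "U \<inter> \<Omega>" x G] open_\<Omega> assms(1) by blast
qed

lemma div_defect_in_chart:
  assumes "0 < \<epsilon>" "x \<in> \<Omega> \<inter> ball x0 \<rho>"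
  shows "indicator \<Omega> x * div3 G x - div3 (cutoff_field \<epsilon>) x
    = (1 - cutoff \<epsilon> x) * div3 G x + ramp' (- \<phi> x / \<epsilon> - 1) / \<epsilon> * (grad \<phi> x \<bullet> G x)"
  using div3_cutoff_field[OF assms] assms(2) by (simp add: algebra_simps)

lemma abs_grad_inner_le_on_layer:
  assumes "0 \<le> \<delta>" "x \<in> \<Omega>" "x \<in> layer (2 * \<epsilon>)"
    and small: "\<And>x. x \<in> closure \<Omega> \<inter> cball x0 r \<Longrightarrow> \<bar>\<phi> x\<bar> < 2 * \<epsilon> \<Longrightarrow> \<bar>grad \<phi> x \<bullet> G x\<bar> \<le> \<delta>"
  shows "\<bar>grad \<phi> x \<bullet> G x\<bar> \<le> \<delta>"
proof (cases "x \<in> cball x0 r")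
  case True
  then show ?thesis
    using small[of x] assms(2,3) closure_subset[of \<Omega>] unfolding layer_def by auto
next
  case False
  then have "G x = 0"
    using support[of x] assms(2) closure_subset[of \<Omega>] by (auto simp: dist_commute)
  then show ?thesis
    using assms(1) by simp
qed

lemma abs_div_defect_le:
  assumes "0 < \<epsilon>" "0 \<le> \<delta>" "\<And>x. x \<in> \<Omega> \<Longrightarrow> \<bar>div3 G x\<bar> \<le> M"
    and small: "\<And>x. x \<in> closure \<Omega> \<inter> cball x0 r \<Longrightarrow> \<bar>\<phi> x\<bar> < 2 * \<epsilon> \<Longrightarrow> \<bar>grad \<phi> x \<bullet> G x\<bar> \<le> \<delta>"
  shows "\<bar>indicator \<Omega> x * div3 G x - div3 (cutoff_field \<epsilon>) x\<bar>
    \<le> (M + 2 * \<delta> / \<epsilon>) * indicator (layer (2 * \<epsilon>)) x"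
proof (cases "x \<in> \<Omega> \<inter> ball x0 \<rho>")
  case False
  then have "indicator \<Omega> x * div3 G x = 0"
    using div3_G_outside_chart by (auto simp: indicator_def)
  moreover have "x \<notin> layer (2 * \<epsilon>)"
    using False chart unfolding layer_def by auto
  ultimately show ?thesis
    using div3_cutoff_field_outside[OF assms(1) False] by simp
next
  case True
  define s where "s = - \<phi> x / \<epsilon> - 1"
  have "\<phi> x < 0"
    using True chart by auto
  have defect: "indicator \<Omega> x * div3 G x - div3 (cutoff_field \<epsilon>) x
      = (1 - cutoff \<epsilon> x) * div3 G x + ramp' s / \<epsilon> * (grad \<phi> x \<bullet> G x)"
    unfolding s_def using True by (rule div_defect_in_chart[OF assms(1)])
  show ?thesis
  proof (cases "x \<in> layer (2 * \<epsilon>)")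
    case False
    then have "\<phi> x \<le> - 2 * \<epsilon>"
      using True \<open>\<phi> x < 0\<close> unfolding layer_def by auto
    then show ?thesis
      using defect cutoff_eq_1[OF assms(1)] ramp'_layer_eq_0[OF assms(1)] False
      unfolding s_def by simp
  next
    case in_layer: True
    have "\<bar>1 - cutoff \<epsilon> x\<bar> \<le> 1"
      using ramp_bounds[of s] unfolding cutoff_def s_def by simp
    then have "\<bar>(1 - cutoff \<epsilon> x) * div3 G x\<bar> \<le> 1 * M"
      unfolding abs_mult using assms(3) True by (intro mult_mono) auto
    moreover have "\<bar>grad \<phi> x \<bullet> G x\<bar> \<le> \<delta>"
      using abs_grad_inner_le_on_layer[OF assms(2) _ in_layer small] True by blast
    then have "\<bar>ramp' s / \<epsilon> * (grad \<phi> x \<bullet> G x)\<bar> \<le> 2 / \<epsilon> * \<delta>"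
      unfolding abs_mult using ramp'_bounds[of s] assms(1)
      by (intro mult_mono) (auto simp: divide_right_mono)
    ultimately have "\<bar>(1 - cutoff \<epsilon> x) * div3 G x + ramp' s / \<epsilon> * (grad \<phi> x \<bullet> G x)\<bar>
        \<le> M + 2 * \<delta> / \<epsilon>"
      using abs_triangle_ineq[of "(1 - cutoff \<epsilon> x) * div3 G x" "ramp' s / \<epsilon> * (grad \<phi> x \<bullet> G x)"]
      by simp
    then show ?thesis
      unfolding defect using in_layer by simp
  qed
qed

lemma abs_div_integral_le:
  assumes "0 < \<epsilon>" "0 \<le> \<delta>" "\<And>x. x \<in> \<Omega> \<Longrightarrow> \<bar>div3 G x\<bar> \<le> M"
    and "\<And>x. x \<in> closure \<Omega> \<inter> cball x0 r \<Longrightarrow> \<bar>\<phi> x\<bar> < 2 * \<epsilon> \<Longrightarrow> \<bar>grad \<phi> x \<bullet> G x\<bar> \<le> \<delta>"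
  shows "\<bar>div_integral \<Omega> G\<bar> \<le> (M + 2 * \<delta> / \<epsilon>) * measure lebesgue (layer (2 * \<epsilon>))"
proof -
  let ?f = "\<lambda>x. indicator \<Omega> x * div3 G x - div3 (cutoff_field \<epsilon>) x"
  let ?g = "\<lambda>x. (M + 2 * \<delta> / \<epsilon>) * indicator (layer (2 * \<epsilon>)) x"
  have int_\<Omega>: "integrable lborel (\<lambda>x. indicator \<Omega> x * div3 G x)"
    by (rule integrable_indicator_div3[OF open_\<Omega> bounded_\<Omega> tangential])
  have layer: "layer (2 * \<epsilon>) \<in> sets lborel" "emeasure lborel (layer (2 * \<epsilon>)) < \<infinity>"
    using open_layer layer_lmeasurable emeasure_completion[of "layer (2 * \<epsilon>)" lborel]
    by (auto simp: fmeasurable_def)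
  have "div_integral \<Omega> G = (\<integral>x. ?f x \<partial>lborel)"
    unfolding div_integral_def using int_\<Omega> integrable_div3_cutoff_field[OF assms(1)]
    by (simp add: integral_div3_cutoff_field[OF assms(1)])
  also have "\<bar>\<dots>\<bar> \<le> (\<integral>x. ?g x \<partial>lborel)"
    using int_\<Omega> integrable_div3_cutoff_field[OF assms(1)] layer abs_div_defect_le[OF assms]
    by (intro integral_abs_bound_integral) auto
  also have "\<dots> = (M + 2 * \<delta> / \<epsilon>) * measure lebesgue (layer (2 * \<epsilon>))"
    using layer by simp
  finally show ?thesis .
qed

lemma grad_inner_small_near_boundary:
  assumes "0 < \<delta>"
  obtains \<eta> where "0 < \<eta>"
    "\<And>x. x \<in> closure \<Omega> \<inter> cball x0 r \<Longrightarrow> \<bar>\<phi> x\<bar> < \<eta> \<Longrightarrow> \<bar>grad \<phi> x \<bullet> G x\<bar> < \<delta>"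
proof -
  define K where "K = closure \<Omega> \<inter> cball x0 r"
  have K: "compact K" "K \<subseteq> ball x0 \<rho>"
    unfolding K_def using r_less by (auto intro: closed_Int_compact)
  have "continuous_on (closure \<Omega>) G"
    using tangential unfolding tangential_field_def by blast
  then have "continuous_on K G"
    by (rule continuous_on_subset) (simp add: K_def)
  then have cont: "continuous_on K (\<lambda>x. grad \<phi> x \<bullet> G x)"
    using continuous_on_subset[OF continuous_on_grad[OF C1_\<phi>] K(2)] by (intro continuous_intros)
  have zero: "\<forall>x\<in>K. \<phi> x = 0 \<longrightarrow> grad \<phi> x \<bullet> G x = 0"
  proof (intro ballI impI)
    fix x assume x: "x \<in> K" "\<phi> x = 0"
    have "x \<in> ball x0 \<rho>"
      using x(1) K(2) by blast
    have "x \<notin> \<Omega>"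
    proof
      assume "x \<in> \<Omega>"
      then have "x \<in> {x \<in> ball x0 \<rho>. \<phi> x < 0}"
        using \<open>x \<in> ball x0 \<rho>\<close> chart by blast
      then show False
        using x(2) by simp
    qed
    moreover have "x \<in> closure \<Omega>"
      using x(1) unfolding K_def by blast
    ultimately have x_frontier: "x \<in> frontier \<Omega> \<inter> ball x0 \<rho>"
      unfolding frontier_def interior_open[OF open_\<Omega>] using \<open>x \<in> ball x0 \<rho>\<close> by blast
    have "\<forall>x\<in>frontier \<Omega>. \<nu> x \<bullet> G x = 0"
      using tangential unfolding tangential_field_def by blast
    with x_frontier show "grad \<phi> x \<bullet> G x = 0"
      by (intro grad_inner_eq_0_on_frontier) auto
  qed
  obtain \<eta> where "0 < \<eta>" "\<forall>x\<in>K. \<bar>\<phi> x\<bar> < \<eta> \<longrightarrow> \<bar>grad \<phi> x \<bullet> G x\<bar> < \<delta>"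
    using small_near_zero_set[OF K(1) cont continuous_on_subset[OF continuous_on_\<phi> K(2)] zero assms]
    by blast
  then show thesis
    by (intro that[of \<eta>]) (auto simp: K_def)
qed

lemma abs_div_integral_le_linear:
  assumes "0 < \<epsilon>" "4 * \<epsilon> \<le> c" "0 \<le> \<delta>" "0 \<le> M" "\<And>x. x \<in> \<Omega> \<Longrightarrow> \<bar>div3 G x\<bar> \<le> M"
    and "\<And>x. x \<in> closure \<Omega> \<inter> cball x0 r \<Longrightarrow> \<bar>\<phi> x\<bar> < 2 * \<epsilon> \<Longrightarrow> \<bar>grad \<phi> x \<bullet> G x\<bar> \<le> \<delta>"
  shows "\<bar>div_integral \<Omega> G\<bar> \<le> 4 * measure lebesgue (ball x0 (\<rho> + 1)) * (M * \<epsilon> + 2 * \<delta>) / c"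
proof -
  have "\<bar>div_integral \<Omega> G\<bar> \<le> (M + 2 * \<delta> / \<epsilon>) * measure lebesgue (layer (2 * \<epsilon>))"
    using assms(1,3,5,6) by (rule abs_div_integral_le)
  also have "\<dots> \<le> (M + 2 * \<delta> / \<epsilon>) * (2 * measure lebesgue (ball x0 (\<rho> + 1)) * (2 * \<epsilon>) / c)"
    using assms(1-4) by (intro mult_left_mono measure_layer_le) auto
  also have "\<dots> = 4 * measure lebesgue (ball x0 (\<rho> + 1)) * (M * \<epsilon> + 2 * \<delta>) / c"
    using assms(1) c_pos by (simp add: field_simps)
  finally show ?thesis .
qed

lemma abs_div_integral_le_tau:
  assumes "0 < \<tau>" "0 \<le> M" "\<And>x. x \<in> \<Omega> \<Longrightarrow> \<bar>div3 G x\<bar> \<le> M"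
  shows "\<bar>div_integral \<Omega> G\<bar> \<le> \<tau>"
proof -
  define V where "V = measure lebesgue (ball x0 (\<rho> + 1)) + 1"
  have V: "0 < V" "measure lebesgue (ball x0 (\<rho> + 1)) \<le> V"
    unfolding V_def using measure_nonneg[of lebesgue "ball x0 (\<rho> + 1)"] by linarith+
  define \<delta> where "\<delta> = \<tau> * c / (16 * V)"
  have \<delta>: "0 < \<delta>"
    unfolding \<delta>_def using assms(1) c_pos V by simp
  obtain \<eta> where \<eta>: "0 < \<eta>"
    "\<And>x. x \<in> closure \<Omega> \<inter> cball x0 r \<Longrightarrow> \<bar>\<phi> x\<bar> < \<eta> \<Longrightarrow> \<bar>grad \<phi> x \<bullet> G x\<bar> < \<delta>"
    using grad_inner_small_near_boundary[OF \<delta>] by blast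
  define \<epsilon> where "\<epsilon> = min (\<eta> / 2) (min (c / 4) (\<tau> * c / (8 * V * (M + 1))))"
  have pos: "0 < 8 * V * (M + 1)"
    using V assms(2) by simp
  have "0 < \<tau> * c / (8 * V * (M + 1))"
    using assms(1) c_pos pos by simp
  then have \<epsilon>: "0 < \<epsilon>" "2 * \<epsilon> \<le> \<eta>" "4 * \<epsilon> \<le> c"
    unfolding \<epsilon>_def using \<eta>(1) c_pos by auto
  have "\<epsilon> \<le> \<tau> * c / (8 * V * (M + 1))"
    unfolding \<epsilon>_def by simp
  then have \<epsilon>_\<tau>: "\<epsilon> * (8 * V * (M + 1)) \<le> \<tau> * c"
    using pos by (simp add: le_divide_eq)
  have small: "\<bar>grad \<phi> x \<bullet> G x\<bar> \<le> \<delta>" if "x \<in> closure \<Omega> \<inter> cball x0 r" "\<bar>\<phi> x\<bar> < 2 * \<epsilon>" for x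
  proof -
    have "\<bar>\<phi> x\<bar> < \<eta>"
      using that(2) \<epsilon>(2) by linarith
    then show ?thesis
      using \<eta>(2)[OF that(1)] by simp
  qed
  have "\<bar>div_integral \<Omega> G\<bar> \<le> 4 * measure lebesgue (ball x0 (\<rho> + 1)) * (M * \<epsilon> + 2 * \<delta>) / c"
    using \<epsilon>(1,3) less_imp_le[OF \<delta>] assms(2,3) small by (rule abs_div_integral_le_linear)
  also have "\<dots> \<le> 4 * V * (M * \<epsilon> + 2 * \<delta>) / c"
    using V(2) assms(2) \<epsilon>(1) \<delta> c_pos by (intro divide_right_mono mult_right_mono) auto
  also have "\<dots> \<le> \<tau> / 2 + \<tau> / 2"
  proof -
    have "8 * V * M * \<epsilon> \<le> \<epsilon> * (8 * V * (M + 1))"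
      using V(1) \<epsilon>(1) by (simp add: algebra_simps)
    then have "4 * V * M * \<epsilon> / c \<le> \<tau> / 2"
      using \<epsilon>_\<tau> c_pos by (simp add: field_simps)
    moreover have "8 * V * \<delta> / c = \<tau> / 2"
      unfolding \<delta>_def using V c_pos by (simp add: field_simps)
    moreover have "4 * V * (M * \<epsilon> + 2 * \<delta>) / c = 4 * V * M * \<epsilon> / c + 8 * V * \<delta> / c"
      by (simp add: add_divide_distrib algebra_simps)
    ultimately show ?thesis
      by linarith
  qed
  finally show ?thesis
    by simp
qed

lemma div_integral_eq_0: "div_integral \<Omega> G = 0"
proof -
  obtain M0 where M0: "\<And>x. x \<in> \<Omega> \<Longrightarrow> \<bar>div3 G x\<bar> \<le> M0"
    using tangential unfolding tangential_field_def by blast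
  then have M: "\<And>x. x \<in> \<Omega> \<Longrightarrow> \<bar>div3 G x\<bar> \<le> max M0 0"
    by (auto simp: le_max_iff_disj)
  have "\<bar>div_integral \<Omega> G\<bar> \<le> 0 + \<tau>" if "0 < \<tau>" for \<tau>
    using abs_div_integral_le_tau[OF that max.cobounded2 M] by simp
  then have "\<bar>div_integral \<Omega> G\<bar> \<le> 0"
    by (rule field_le_epsilon)
  then show ?thesis
    by simp
qed

end

lemma (in boundary_chart) div_theorem_near_boundary:
  assumes "r < \<rho>"
  shows "div_theorem_near \<Omega> \<nu> x0 r"
  unfolding div_theorem_near_def
proof (intro allI impI)
  fix G assume "tangential_field \<Omega> \<nu> G" "\<forall>x\<in>closure \<Omega>. r \<le> dist x x0 \<longrightarrow> G x = 0"
  then interpret boundary_chart_field \<Omega> \<nu> \<phi> x0 \<rho> k c G r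
    using assms by unfold_locales auto
  show "div_integral \<Omega> G = 0"
    by (rule div_integral_eq_0)
qed

section \<open>The divergence theorem for tangential fields\<close>

lemma abs_ge_half_near:
  fixes g :: "'a::metric_space \<Rightarrow> real"
  assumes "isCont g x0" "g x0 \<noteq> 0"
  obtains d where "0 < d" "\<And>y. y \<in> ball x0 d \<Longrightarrow> \<bar>g x0\<bar> / 2 \<le> \<bar>g y\<bar>"
proof -
  obtain d where "0 < d" "\<And>y. dist y x0 < d \<Longrightarrow> dist (g y) (g x0) < \<bar>g x0\<bar> / 2"
    using assms unfolding continuous_at_eps_delta by (metis half_gt_zero zero_less_abs_iff)
  moreover have "\<bar>g x0\<bar> / 2 \<le> \<bar>g y\<bar>" if "\<bar>g y - g x0\<bar> < \<bar>g x0\<bar> / 2" for y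
    using that abs_triangle_ineq2[of "g x0" "g y"] abs_minus_commute[of "g x0" "g y"] by linarith
  ultimately show thesis
    by (intro that[of d]) (auto simp: dist_real_def dist_commute)
qed

lemma boundary_chart_exists:
  assumes "open \<Omega>" "bounded \<Omega>" "C2_boundary_normal \<Omega> \<nu>" "x0 \<in> frontier \<Omega>"
  obtains \<phi> \<rho> k c where "0 < \<rho>" "boundary_chart \<Omega> \<nu> \<phi> x0 \<rho> k c"
proof -
  obtain r \<phi> where r: "0 < r" and C2: "Ck_on 2 (ball x0 r) \<phi>"
    and grad_nz: "\<forall>x\<in>ball x0 r. grad \<phi> x \<noteq> 0"
    and chart: "\<Omega> \<inter> ball x0 r = {x \<in> ball x0 r. \<phi> x < 0}"
    and normal: "\<forall>x\<in>frontier \<Omega> \<inter> ball x0 r. \<nu> x = grad \<phi> x /\<^sub>R norm (grad \<phi> x)"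
    using assms(3,4) unfolding C2_boundary_normal_def by blast
  have "Ck_on 1 (ball x0 r) \<phi>"
    using Ck_on_Suc_imp_Ck_on[of 1] C2 by (simp add: numeral_2_eq_2)
  then have C1: "\<And>x. x \<in> ball x0 r \<Longrightarrow> C1_at \<phi> x"
    using Ck_on_1_iff_C1_at[of "ball x0 r" \<phi>] by simp
  have "grad \<phi> x0 \<noteq> 0"
    using grad_nz r by simp
  then obtain k where k: "pd k \<phi> x0 \<noteq> 0"
    unfolding grad_def vec_eq_iff by auto
  define c where "c = \<bar>pd k \<phi> x0\<bar> / 2"
  have c: "0 < c"
    unfolding c_def using k by simp
  obtain d where d: "0 < d" "\<And>y. y \<in> ball x0 d \<Longrightarrow> c \<le> \<bar>pd k \<phi> y\<bar>"
    using abs_ge_half_near[OF C1_at_isCont_pd[OF C1] k] r unfolding c_def by auto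
  define \<rho> where "\<rho> = min r d"
  have ball: "ball x0 \<rho> \<subseteq> ball x0 r"
    unfolding \<rho>_def by auto
  have "boundary_chart \<Omega> \<nu> \<phi> x0 \<rho> k c"
  proof
    show "open \<Omega>" "bounded \<Omega>" "0 < c"
      using assms(1,2) c by auto
    show "C1_at \<phi> x" if "x \<in> ball x0 \<rho>" for x
      using C1 ball that by blast
    show "\<Omega> \<inter> ball x0 \<rho> = {x \<in> ball x0 \<rho>. \<phi> x < 0}"
      using chart ball by blast
    show "\<nu> x = grad \<phi> x /\<^sub>R norm (grad \<phi> x)" if "x \<in> frontier \<Omega> \<inter> ball x0 \<rho>" for x
      using normal ball that by blast
    show "c \<le> \<bar>pd k \<phi> x\<bar>" if "x \<in> ball x0 \<rho>" for x
      using d(2) that unfolding \<rho>_def by auto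
  qed
  moreover have "0 < \<rho>"
    unfolding \<rho>_def using r d by simp
  ultimately show thesis
    using that by blast
qed

lemma div_theorem_near_exists:
  assumes "open \<Omega>" "bounded \<Omega>" "C2_boundary_normal \<Omega> \<nu>" "y \<in> closure \<Omega>"
  shows "\<exists>\<rho>>0. div_theorem_near \<Omega> \<nu> y \<rho>"
proof (cases "y \<in> \<Omega>")
  case True
  then obtain \<rho> where "0 < \<rho>" "cball y \<rho> \<subseteq> \<Omega>"
    using open_contains_cball[THEN iffD1, OF assms(1)] by blast
  then show ?thesis
    using div_theorem_near_interior[OF assms(1,2)] by blast
next
  case False
  then have "y \<in> frontier \<Omega>"
    using assms(1,4) by (simp add: frontier_def interior_open)
  then obtain \<phi> \<rho> k c where "0 < \<rho>" "boundary_chart \<Omega> \<nu> \<phi> y \<rho> k c"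
    by (rule boundary_chart_exists[OF assms(1-3)])
  then show ?thesis
    using boundary_chart.div_theorem_near_boundary[of \<Omega> \<nu> \<phi> y \<rho> k c "\<rho> / 2"]
    by (intro exI[of _ "\<rho> / 2"]) auto
qed

theorem div_integral_tangential_eq_0:
  assumes "open \<Omega>" "bounded \<Omega>" "C2_boundary_normal \<Omega> \<nu>" "tangential_field \<Omega> \<nu> G"
  shows "div_integral \<Omega> G = 0"
proof -
  have "\<exists>\<rho>>0. div_theorem_near \<Omega> \<nu> y \<rho>" if "y \<in> closure \<Omega>" for y
    using div_theorem_near_exists[OF assms(1-3) that] .
  then obtain rad where rad: "\<forall>y\<in>closure \<Omega>. 0 < rad y \<and> div_theorem_near \<Omega> \<nu> y (rad y)"
    using bchoice[of "closure \<Omega>" "\<lambda>y \<rho>. 0 < \<rho> \<and> div_theorem_near \<Omega> \<nu> y \<rho>"] by blast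
  have compact: "compact (closure \<Omega>)"
    using assms(2) by (simp add: compact_closure)
  have cover: "closure \<Omega> \<subseteq> (\<Union>y\<in>closure \<Omega>. ball y (rad y / 2))"
  proof
    fix y assume "y \<in> closure \<Omega>"
    then have "y \<in> ball y (rad y / 2)"
      using rad by simp
    with \<open>y \<in> closure \<Omega>\<close> show "y \<in> (\<Union>y\<in>closure \<Omega>. ball y (rad y / 2))"
      by blast
  qed
  obtain S where S: "S \<subseteq> closure \<Omega>" "finite S" "closure \<Omega> \<subseteq> (\<Union>y\<in>S. ball y (rad y / 2))"
    using compactE_image[OF compact _ cover] by blast
  show ?thesis
  proof (rule div_integral_eq_0_finite_cover[OF assms(1,2) S(2) _ assms(4)])
    show "0 < rad y \<and> div_theorem_near \<Omega> \<nu> y (rad y)" if "y \<in> S" for y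
      using rad S(1) that by blast
    show "\<forall>x\<in>closure \<Omega>. G x \<noteq> 0 \<longrightarrow> (\<exists>y\<in>S. dist x y < rad y / 2)"
    proof (intro ballI impI)
      fix x assume "x \<in> closure \<Omega>"
      then obtain y where "y \<in> S" "x \<in> ball y (rad y / 2)"
        using S(3) by blast
      then show "\<exists>y\<in>S. dist x y < rad y / 2"
        by (auto simp: dist_commute)
    qed
  qed
qed

section \<open>Weak solutions of the stationary Euler equations\<close>

lemma L2_loc_bounded:
  fixes f :: "real^3 \<Rightarrow> 'b::euclidean_space"
  assumes meas: "f \<in> borel_measurable lborel" and bound: "\<And>x. norm (f x) \<le> B"
  shows "L2_loc f"
  unfolding L2_loc_def
proof (intro conjI allI impI meas)
  fix K :: "(real^3) set" assume K: "compact K"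
  obtain R where R: "K \<subseteq> cball 0 R"
    using bounded_subset_ballD[OF compact_imp_bounded[OF K], of 0] ball_subset_cball by blast
  have "K \<in> sets lborel"
    using K by (simp add: borel_compact)
  then have "(\<lambda>x. indicator K x *\<^sub>R (norm (f x))\<^sup>2) \<in> borel_measurable lborel"
    using meas by measurable
  moreover have "\<bar>indicator K x *\<^sub>R (norm (f x))\<^sup>2\<bar> \<le> B\<^sup>2" for x
  proof -
    have "(norm (f x))\<^sup>2 \<le> B\<^sup>2"
      using bound[of x] by (intro power_mono) auto
    then show ?thesis
      by (simp add: indicator_def)
  qed
  moreover have "indicator K x *\<^sub>R (norm (f x))\<^sup>2 = 0" if "x \<notin> cball 0 R" for x
  proof -
    have "x \<notin> K"
      using R that by blast
    then show ?thesis
      by simp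
  qed
  ultimately show "set_integrable lborel K (\<lambda>x. (norm (f x))\<^sup>2)"
    unfolding set_integrable_def by (rule integrable_bounded_support)
qed

lemma test_fun_C1_at: "test_fun \<phi> \<Longrightarrow> C1_at \<phi> x"
  using smooth_imp_C1_at[of \<phi> x] unfolding test_fun_def by blast

lemma
  assumes "test_field w"
  shows test_field_C1_at: "C1_at (\<lambda>y. w y $ i) x"
    and test_field_C1_at_pd: "C1_at (pd j (\<lambda>y. w y $ i)) x"
proof -
  have "smooth (\<lambda>y. w y $ i)"
    using assms unfolding test_field_def by blast
  then show "C1_at (\<lambda>y. w y $ i) x" "C1_at (pd j (\<lambda>y. w y $ i)) x"
    by (simp_all add: smooth_imp_C1_at smooth_pd)
qed

lemma test_field_compact_support:
  assumes "test_field w"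
  obtains R where "\<And>x. R \<le> norm x \<Longrightarrow> w x = 0"
proof -
  have "bounded (closure {x. w x \<noteq> 0})"
    using assms unfolding test_field_def by (auto intro: compact_imp_bounded)
  then obtain R where R: "closure {x. w x \<noteq> 0} \<subseteq> ball 0 R"
    using bounded_subset_ballD by blast
  have "w x = 0" if "R \<le> norm x" for x
  proof (rule ccontr)
    assume "w x \<noteq> 0"
    then have "x \<in> closure {x. w x \<noteq> 0}"
      using closure_subset[of "{x. w x \<noteq> 0}"] by blast
    then show False
      using R that by auto
  qed
  then show thesis
    by (rule that)
qed

lemma
  assumes "test_field w"
  shows integrable_div3_test_field: "integrable lborel (div3 w)"
    and integral_div3_test_field: "(\<integral>x. div3 w x \<partial>lborel) = 0"
proof -
  obtain R where "\<And>x. R \<le> norm x \<Longrightarrow> w x = 0"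
    using test_field_compact_support[OF assms] by blast
  then show "integrable lborel (div3 w)" "(\<integral>x. div3 w x \<partial>lborel) = 0"
    using integrable_div3_compact_support integral_div3_compact_support test_field_C1_at[OF assms]
    by blast+
qed

lemma grad_inner_velocity:
  fixes v w :: "real^3 \<Rightarrow> real^3" and q :: "real^3 \<Rightarrow> real"
  assumes C1_v: "\<And>i. C1_at (\<lambda>y. v y $ i) x" and C1_w: "\<And>i. C1_at (\<lambda>y. w y $ i) x"
    and euler: "\<And>i. (\<Sum>j\<in>UNIV. v x $ j * pd j (\<lambda>y. v y $ i) x) + pd i q x = 0"
  shows "grad (\<lambda>y. v y \<bullet> w y) x \<bullet> v x = tensor_grad (v x) w x - grad q x \<bullet> w x"
proof -
  have pd_vw: "pd j (\<lambda>y. \<Sum>k\<in>UNIV. v y $ k * w y $ k) x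
      = (\<Sum>k\<in>UNIV. v x $ k * pd j (\<lambda>y. w y $ k) x + pd j (\<lambda>y. v y $ k) x * w x $ k)" for j
    using C1_v C1_w by (simp add: pd_sum pd_mult C1_at_differentiable)
  have "grad (\<lambda>y. v y \<bullet> w y) x \<bullet> v x
      = (\<Sum>j\<in>UNIV. \<Sum>k\<in>UNIV. v x $ k * v x $ j * pd j (\<lambda>y. w y $ k) x)
        + (\<Sum>j\<in>UNIV. \<Sum>k\<in>UNIV. w x $ k * (v x $ j * pd j (\<lambda>y. v y $ k) x))"
    unfolding inner_vec_def inner_real_def grad_def pd_vw
    by (simp add: sum_distrib_left sum_distrib_right sum.distrib algebra_simps)
  also have "(\<Sum>j\<in>UNIV. \<Sum>k\<in>UNIV. v x $ k * v x $ j * pd j (\<lambda>y. w y $ k) x) = tensor_grad (v x) w x"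
    unfolding tensor_grad_def by (rule sum.swap)
  also have "(\<Sum>j\<in>UNIV. \<Sum>k\<in>UNIV. w x $ k * (v x $ j * pd j (\<lambda>y. v y $ k) x))
      = (\<Sum>k\<in>UNIV. w x $ k * (\<Sum>j\<in>UNIV. v x $ j * pd j (\<lambda>y. v y $ k) x))"
    by (subst sum.swap) (simp add: sum_distrib_left)
  also have "\<dots> = - (grad q x \<bullet> w x)"
    using euler unfolding grad_def inner_vec_def
    by (simp add: eq_neg_iff_add_eq_0[symmetric] sum_negf[symmetric] mult.commute)
  finally show ?thesis
    by simp
qed

lemma div3_euler_flux:
  fixes v w :: "real^3 \<Rightarrow> real^3" and q :: "real^3 \<Rightarrow> real"
  assumes C1_v: "\<And>i. C1_at (\<lambda>y. v y $ i) x" and C1_w: "\<And>i. C1_at (\<lambda>y. w y $ i) x"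
    and C1_q: "C1_at q x"
    and euler: "\<And>i. (\<Sum>j\<in>UNIV. v x $ j * pd j (\<lambda>y. v y $ i) x) + pd i q x = 0"
    and divfree: "div3 v x = 0"
  shows "div3 (\<lambda>y. (v y \<bullet> w y) *\<^sub>R v y + q y *\<^sub>R w y) x = tensor_grad (v x) w x + q x * div3 w x"
proof -
  have C1_vw: "C1_at (\<lambda>y. v y \<bullet> w y) x"
    unfolding inner_vec_def inner_real_def by (intro C1_at_sum C1_at_mult C1_v C1_w) simp
  have "div3 (\<lambda>y. (v y \<bullet> w y) *\<^sub>R v y + q y *\<^sub>R w y) x
      = div3 (\<lambda>y. (v y \<bullet> w y) *\<^sub>R v y) x + div3 (\<lambda>y. q y *\<^sub>R w y) x"
    by (rule div3_add) (simp_all add: C1_at_mult C1_vw C1_v C1_q C1_w)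
  also have "\<dots> = (v x \<bullet> w x) * div3 v x + grad (\<lambda>y. v y \<bullet> w y) x \<bullet> v x
      + (q x * div3 w x + grad q x \<bullet> w x)"
    using div3_scaleR[OF C1_vw C1_v] div3_scaleR[OF C1_q C1_w] by simp
  finally show ?thesis
    using grad_inner_velocity[OF C1_v C1_w euler] divfree by simp
qed

locale stationary_euler =
  fixes \<Omega> :: "(real^3) set" and \<nu> v :: "real^3 \<Rightarrow> real^3" and pt :: "real^3 \<Rightarrow> real" and c :: real
  assumes open_\<Omega>: "open \<Omega>" and bounded_\<Omega>: "bounded \<Omega>" and boundary: "C2_boundary_normal \<Omega> \<nu>"
    and C1_v: "\<And>i x. x \<in> \<Omega> \<Longrightarrow> C1_at (\<lambda>y. v y $ i) x"
    and C1_pt: "\<And>x. x \<in> \<Omega> \<Longrightarrow> C1_at pt x"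
    and cont_v: "continuous_on (closure \<Omega>) v" and cont_pt: "continuous_on (closure \<Omega>) pt"
    and euler: "\<And>x i. x \<in> \<Omega> \<Longrightarrow> (\<Sum>j\<in>UNIV. v x $ j * pd j (\<lambda>y. v y $ i) x) + pd i pt x = 0"
    and divfree: "\<And>x. x \<in> \<Omega> \<Longrightarrow> div3 v x = 0"
    and bc_v: "\<And>x. x \<in> frontier \<Omega> \<Longrightarrow> \<nu> x \<bullet> v x = 0"
    and bc_p: "\<And>x. x \<in> frontier \<Omega> \<Longrightarrow> pt x = c"
begin

definition u :: "real^3 \<Rightarrow> real^3" where
  "u x = (if x \<in> \<Omega> then v x else 0)"

definition p :: "real^3 \<Rightarrow> real" where
  "p x = (if x \<in> \<Omega> then pt x else c)"

lemma L2_loc_u: "L2_loc u"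
proof -
  have "(\<lambda>x. indicator \<Omega> x *\<^sub>R v x) \<in> borel_measurable borel"
    using open_\<Omega> continuous_on_subset[OF cont_v closure_subset]
    by (intro borel_measurable_continuous_on_indicator) auto
  moreover have "(\<lambda>x. indicator \<Omega> x *\<^sub>R v x) = u"
    unfolding u_def by (auto simp: indicator_def)
  moreover obtain B where "\<And>x. x \<in> closure \<Omega> \<Longrightarrow> norm (v x) \<le> B"
    using bounded_on_closure[OF bounded_\<Omega> cont_v] by blast
  then have "norm (u x) \<le> max B 0" for x
    unfolding u_def using closure_subset[of \<Omega>] by (auto simp: le_max_iff_disj)
  ultimately show ?thesis
    by (intro L2_loc_bounded) auto
qed

lemma L2_loc_p: "L2_loc p"
proof -
  have "(\<lambda>x. indicator \<Omega> x *\<^sub>R (pt x - c)) \<in> borel_measurable borel"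
    using open_\<Omega> continuous_on_subset[OF cont_pt closure_subset]
    by (intro borel_measurable_continuous_on_indicator continuous_intros) auto
  then have "(\<lambda>x. indicator \<Omega> x *\<^sub>R (pt x - c) + c) \<in> borel_measurable borel"
    by simp
  moreover have "(\<lambda>x. indicator \<Omega> x *\<^sub>R (pt x - c) + c) = p"
    unfolding p_def by (auto simp: indicator_def)
  moreover obtain B where "\<And>x. x \<in> closure \<Omega> \<Longrightarrow> norm (pt x) \<le> B"
    using bounded_on_closure[OF bounded_\<Omega> cont_pt] by blast
  then have "norm (p x) \<le> max B \<bar>c\<bar>" for x
    unfolding p_def using closure_subset[of \<Omega>] by (auto simp: le_max_iff_disj)
  ultimately show ?thesis
    by (intro L2_loc_bounded) auto
qed

lemma tangential_field_v: "tangential_field \<Omega> \<nu> v"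
  unfolding tangential_field_def using cont_v C1_v divfree bc_v by auto

definition flux :: "(real^3 \<Rightarrow> real^3) \<Rightarrow> real^3 \<Rightarrow> real^3" where
  "flux w y = (v y \<bullet> w y) *\<^sub>R v y + (pt y - c) *\<^sub>R w y"

lemma div3_flux:
  assumes "test_field w" "x \<in> \<Omega>"
  shows "div3 (flux w) x = tensor_grad (v x) w x + (pt x - c) * div3 w x"
proof -
  have "pd i (\<lambda>y. pt y - c) x = pd i pt x" for i
    using pd_diff[of pt x "\<lambda>y. c"] C1_at_differentiable[OF C1_pt[OF assms(2)]] by (simp add: pd_const)
  then show ?thesis
    unfolding flux_def[abs_def] using assms euler divfree
    by (intro div3_euler_flux C1_v test_field_C1_at C1_at_diff C1_pt C1_at_const) auto
qed

lemma tangential_field_flux: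
  assumes "test_field w"
  shows "tangential_field \<Omega> \<nu> (flux w)"
proof -
  have cont_w: "continuous_on UNIV w"
    using test_field_C1_at[OF assms] continuous_on_C1_at continuous_on_vec_lambda[of UNIV "\<lambda>i x. w x $ i"]
    by simp
  have cont_pd_w: "continuous_on UNIV (pd j (\<lambda>y. w y $ i))" for i j
    using test_field_C1_at_pd[OF assms] by (rule continuous_on_C1_at)
  have "continuous_on (closure \<Omega>) (\<lambda>x. tensor_grad (v x) w x + (pt x - c) * div3 w x)"
    unfolding tensor_grad_def div3_def using cont_v cont_pt cont_pd_w
    by (intro continuous_intros) (auto intro: continuous_on_subset)
  then obtain B where B: "\<And>x. x \<in> closure \<Omega> \<Longrightarrow> norm (tensor_grad (v x) w x + (pt x - c) * div3 w x) \<le> B"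
    using bounded_on_closure[OF bounded_\<Omega>] by blast
  have "\<bar>div3 (flux w) x\<bar> \<le> B" if "x \<in> \<Omega>" for x
    using B[of x] div3_flux[OF assms that] closure_subset[of \<Omega>] that by auto
  moreover have "continuous_on (closure \<Omega>) (flux w)"
    unfolding flux_def using cont_v cont_pt continuous_on_subset[OF cont_w]
    by (intro continuous_intros) auto
  moreover have "C1_at (\<lambda>y. flux w y $ j) x" if "x \<in> \<Omega>" for j x
    unfolding flux_def inner_vec_def inner_real_def using that
    by (simp add: C1_at_add C1_at_mult C1_at_sum C1_at_diff C1_at_const C1_v C1_pt test_field_C1_at[OF assms])
  moreover have "\<nu> x \<bullet> flux w x = 0" if "x \<in> frontier \<Omega>" for x
    unfolding flux_def using bc_v[OF that] bc_p[OF that] by (simp add: inner_add_right)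
  ultimately show ?thesis
    unfolding tangential_field_def by blast
qed

lemma weak_momentum:
  assumes "test_field w"
  shows "(\<integral>x. tensor_grad (u x) w x + p x * div3 w x \<partial>lborel) = 0"
proof -
  have "tensor_grad (u x) w x + p x * div3 w x = indicator \<Omega> x * div3 (flux w) x + c * div3 w x" for x
    using div3_flux[OF assms] unfolding u_def p_def
    by (cases "x \<in> \<Omega>") (auto simp: tensor_grad_def algebra_simps)
  then have "(\<integral>x. tensor_grad (u x) w x + p x * div3 w x \<partial>lborel)
      = (\<integral>x. indicator \<Omega> x * div3 (flux w) x + c * div3 w x \<partial>lborel)"
    by simp
  also have "\<dots> = div_integral \<Omega> (flux w) + c * (\<integral>x. div3 w x \<partial>lborel)"
    unfolding div_integral_def
    using integrable_indicator_div3[OF open_\<Omega> bounded_\<Omega> tangential_field_flux[OF assms]]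
      integrable_div3_test_field[OF assms]
    by simp
  also have "\<dots> = 0"
    using div_integral_tangential_eq_0[OF open_\<Omega> bounded_\<Omega> boundary tangential_field_flux[OF assms]]
      integral_div3_test_field[OF assms]
    by simp
  finally show ?thesis .
qed

lemma weak_incompressibility:
  assumes "test_fun \<phi>"
  shows "(\<integral>x. u x \<bullet> grad \<phi> x \<partial>lborel) = 0"
proof -
  have C1_\<phi>: "C1_at \<phi> x" for x
    using assms by (rule test_fun_C1_at)
  have "u x \<bullet> grad \<phi> x = indicator \<Omega> x * div3 (\<lambda>y. \<phi> y *\<^sub>R v y) x" for x
    using div3_scaleR[OF C1_\<phi> C1_v] divfree unfolding u_def
    by (cases "x \<in> \<Omega>") (auto simp: inner_commute)
  then have "(\<integral>x. u x \<bullet> grad \<phi> x \<partial>lborel) = div_integral \<Omega> (\<lambda>y. \<phi> y *\<^sub>R v y)"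
    unfolding div_integral_def by simp
  also have "\<dots> = 0"
    using tangential_field_scaleR[OF bounded_\<Omega> C1_\<phi> tangential_field_v]
    by (rule div_integral_tangential_eq_0[OF open_\<Omega> bounded_\<Omega> boundary])
  finally show ?thesis .
qed

lemma weak_euler_extension: "weak_euler u p"
  unfolding weak_euler_def using L2_loc_u L2_loc_p weak_momentum weak_incompressibility by blast

end

theorem lemma2p1:
  fixes \<Omega> :: "(real^3) set" and \<nu> v :: "real^3 \<Rightarrow> real^3" and pt :: "real^3 \<Rightarrow> real" and c :: real
  assumes dom: "open \<Omega>" "connected \<Omega>" "bounded \<Omega>" "\<Omega> \<noteq> {}"
    and bdry: "C2_boundary_normal \<Omega> \<nu>"
    and v_C1: "\<forall>i. Ck_on 1 \<Omega> (\<lambda>x. v x $ i)"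
    and v_L2: "set_borel_measurable lborel \<Omega> v" "set_integrable lborel \<Omega> (\<lambda>x. (norm (v x))\<^sup>2)"
    and p_C1: "Ck_on 1 \<Omega> pt"
    and p_L1: "set_integrable lborel \<Omega> pt"
    and v_cont: "continuous_on (closure \<Omega>) v"
    and p_cont: "continuous_on (closure \<Omega>) pt"
    and euler: "\<forall>x\<in>\<Omega>. \<forall>i. (\<Sum>j\<in>UNIV. v x $ j * pd j (\<lambda>y. v y $ i) x) + pd i pt x = 0"
    and divfree: "\<forall>x\<in>\<Omega>. div3 v x = 0"
    and bc_v: "\<forall>x\<in>frontier \<Omega>. \<nu> x \<bullet> v x = 0"
    and bc_p: "\<forall>x\<in>frontier \<Omega>. pt x = c"
  shows "weak_euler (\<lambda>x. if x \<in> \<Omega> then v x else 0) (\<lambda>x. if x \<in> \<Omega> then pt x else c)"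
proof -
  interpret stationary_euler \<Omega> \<nu> v pt c
  proof
    show "open \<Omega>" "bounded \<Omega>"
      using dom by auto
    show "C1_at (\<lambda>y. v y $ i) x" if "x \<in> \<Omega>" for i x
      using v_C1 Ck_on_1_iff_C1_at[OF dom(1)] that by blast
    show "C1_at pt x" if "x \<in> \<Omega>" for x
      using p_C1 Ck_on_1_iff_C1_at[OF dom(1)] that by blast
  qed (use bdry v_cont p_cont euler divfree bc_v bc_p in auto)
  show ?thesis
    using weak_euler_extension unfolding u_def[abs_def] p_def[abs_def] .
qed

end
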